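(* In the setting described in the context, suppose Method 2 does not stop and let $(x^k)_{k\in\mathbb N}$ be the generated sequence. Then every weak accumulation point of $(x^k)_{k\in\mathbb N}$ belongs to $\operatorname{zer}(A+B)$.
   Context: Let $\mathcal H$ be a real Hilbert space with inner product $\langle\cdot,\cdot\rangle$ and norm $\|\cdot\|$. Let $A_1:\mathcal H\to\mathcal H$ be $\beta$-cocoercive for some $\beta>0$ (i.e. $\langle A_1x-A_1y,x-y\rangle\ge\beta\|A_1x-A_1y\|^2$ for all $x,y$), let $A_2:\mathcal H\to\mathcal H$ be maximally monotone and uniformly continuous, let $B:\mathcal H\rightrightarrows\mathcal H$ be maximally monotone, and set $A:=A_1+A_2$. Assume $\operatorname{zer}(A+B):=\{x:0\in Ax+Bx\}\neq\emptyset$. $J_{\alpha B}:=(I+\alpha B)^{-1}$ for $\alpha>0$, and $P_C$ denotes the orthogonal projection onto a nonempty closed convex set $C$. Fix $\theta,\delta\in(0,1)$, $\bar\delta>0$ with $1-\delta-\bar\delta>0$, and $\alpha_{-1}>0$ with $\alpha_{-1}\le4\beta\bar\delta$. Conceptual Algorithm: pick $x^0\in\mathcal H$. Given $x^k$ and $\alpha_{k-1}$, for $j\in\mathbb N$ let $\bar x^k_j:=J_{\alpha_{k-1}\theta^jB}(x^k-\alpha_{k-1}\theta^jAx^k)$ and let $j(k)$ be the smallest $j\in\mathbb N$ with $\alpha_{k-1}\theta^j\langle A_2x^k-A_2\bar x^k_j,x^k-\bar x^k_j\rangle\le\delta\|x^k-\bar x^k_j\|^2$. Set $\alpha_k:=\alpha_{k-1}\theta^{j(k)}$,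 $\bar x^k:=J_{\alpha_kB}(x^k-\alpha_kAx^k)$, $r_k:=\frac{\bar\delta}{\alpha_k}\|x^k-\bar x^k\|^2$, $T_k:=\{x\in\mathcal H:\langle \frac{x^k-\bar x^k}{\alpha_k}-(A_2x^k-A_2\bar x^k),x-\bar x^k\rangle\le r_k\}$ and $\Gamma_k:=\{x\in\mathcal H:\langle x^0-x^k,x-x^k\rangle\le0\}$. Method 2 sets $x^{k+1}:=P_{T_k\cap\Gamma_k}(x^0)$ and stops if $x^{k+1}=x^k$. *)

theory Defs
  imports "HOL-Analysis.Analysis"
begin

definition monotone_op :: "('a::real_inner \<Rightarrow> 'a set) \<Rightarrow> bool" where
  "monotone_op B \<longleftrightarrow> (\<forall>x y u v. u \<in> B x \<longrightarrow> v \<in> B y \<longrightarrow> inner (u - v) (x - y) \<ge> 0)"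

definition maximal_monotone :: "('a::real_inner \<Rightarrow> 'a set) \<Rightarrow> bool" where
  "maximal_monotone B \<longleftrightarrow> monotone_op B \<and>
     (\<forall>x u. (\<forall>y v. v \<in> B y \<longrightarrow> inner (u - v) (x - y) \<ge> 0) \<longrightarrow> u \<in> B x)"

definition cocoercive :: "real \<Rightarrow> ('a::real_inner \<Rightarrow> 'a) \<Rightarrow> bool" where
  "cocoercive \<beta> F \<longleftrightarrow> (\<forall>x y. inner (F x - F y) (x - y) \<ge> \<beta> * (norm (F x - F y))\<^sup>2)"

text \<open>Resolvent \<open>J_{\<alpha>B} = (I + \<alpha>B)\<^sup>-\<^sup>1\<close> (single-valued for maximally monotone B, \<alpha> > 0).\<close>
definition resolvent :: "real \<Rightarrow> ('a::real_inner \<Rightarrow> 'a set) \<Rightarrow> 'a \<Rightarrow> 'a" where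
  "resolvent \<alpha> B z = (THE x. \<exists>u \<in> B x. z = x + \<alpha> *\<^sub>R u)"

definition zer_sum :: "('a::real_inner \<Rightarrow> 'a) \<Rightarrow> ('a \<Rightarrow> 'a set) \<Rightarrow> 'a set" where
  "zer_sum A B = {x. \<exists>u \<in> B x. A x + u = 0}"

definition weak_conv :: "(nat \<Rightarrow> 'a::real_inner) \<Rightarrow> 'a \<Rightarrow> bool" where
  "weak_conv s p \<longleftrightarrow> (\<forall>y. ((\<lambda>k. inner (s k) y) \<longlongrightarrow> inner p y) sequentially)"

definition weak_accum_point :: "(nat \<Rightarrow> 'a::real_inner) \<Rightarrow> 'a \<Rightarrow> bool" where
  "weak_accum_point s p \<longleftrightarrow> (\<exists>r. strict_mono r \<and> weak_conv (s \<circ> r) p)"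

definition fb_point :: "('a::real_inner \<Rightarrow> 'a) \<Rightarrow> ('a \<Rightarrow> 'a set) \<Rightarrow> real \<Rightarrow> 'a \<Rightarrow> 'a" where
  "fb_point A B \<alpha> x = resolvent \<alpha> B (x - \<alpha> *\<^sub>R A x)"

text \<open>Linesearch index \<open>j(k)\<close>: smallest j satisfying the Armijo-type condition,
  given current point x and previous step size \<alpha> (= \<alpha>_{k-1}).\<close>
definition ls_index :: "('a::real_inner \<Rightarrow> 'a) \<Rightarrow> ('a \<Rightarrow> 'a) \<Rightarrow> ('a \<Rightarrow> 'a set) \<Rightarrow> real \<Rightarrow> real \<Rightarrow> real \<Rightarrow> 'a \<Rightarrow> nat" where
  "ls_index A A2 B \<theta> \<delta> \<alpha> x = (LEAST j::nat.
     \<alpha> * \<theta> ^ j * inner (A2 x - A2 (fb_point A B (\<alpha> * \<theta> ^ j) x)) (x - fb_point A B (\<alpha> * \<theta> ^ j) x)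
       \<le> \<delta> * (norm (x - fb_point A B (\<alpha> * \<theta> ^ j) x))\<^sup>2)"

text \<open>Half-space \<open>T_k\<close>, for step size \<alpha> = \<alpha>_k, current point x = x^k and xb = \<open>x\<bar>^k\<close>.\<close>
definition T_set :: "('a::real_inner \<Rightarrow> 'a) \<Rightarrow> real \<Rightarrow> real \<Rightarrow> 'a \<Rightarrow> 'a \<Rightarrow> 'a set" where
  "T_set A2 \<delta>b \<alpha> x xb = {z. inner ((1 / \<alpha>) *\<^sub>R (x - xb) - (A2 x - A2 xb)) (z - xb)
       \<le> (\<delta>b / \<alpha>) * (norm (x - xb))\<^sup>2}"

definition Gamma_set :: "'a::real_inner \<Rightarrow> 'a \<Rightarrow> 'a set" where
  "Gamma_set x0 x = {z. inner (x0 - x) (z - x) \<le> 0}"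

text \<open>Orthogonal (metric) projection onto a set C (for nonempty closed convex C in a Hilbert
  space this is the unique nearest point).\<close>
definition proj :: "'a::real_inner set \<Rightarrow> 'a \<Rightarrow> 'a" where
  "proj C z = (SOME p. p \<in> C \<and> (\<forall>y \<in> C. dist z p \<le> dist z y))"

end

theory Submission
  imports Defs
begin

(* Every zero z of A + B lies in all the sets T_k and Gamma_k, so <x0 - x_k, z - x_k> <= 0
   and ||z - x_k||^2 + ||x_k - x0||^2 <= ||z - x0||^2. Hence ||x_k - x0|| increases to a limit
   L, the steps x_(k+1) - x_k tend to 0, and via the half-space T_k and the linesearch so do
   the forward-backward residuals. This yields approximate zeros of A + B within distance
   L + e of x0, for every e > 0. A Minty-type argument, which only needs A uniformly
   continuous, together with the fact that a directed family of closed convex sets meeting a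
   fixed ball has a common point (a substitute for weak compactness), turns them into a zero q
   with ||q - x0|| <= L. Then ||q - x_k||^2 <= L^2 - ||x_k - x0||^2 -> 0: the iterates converge
   strongly to q, which is therefore their only weak accumulation point. That the resolvent
   is well defined is Minty's theorem, proved via the Debrunner-Flor lemma. *)

section \<open>Nearest points and closed convex sets in Hilbert space\<close>

lemma midpoint_in_convex:
  assumes "convex S" "a \<in> S" "b \<in> S"
  shows "midpoint a b \<in> S"
  using convexD[OF assms, of "1/2" "1/2"] by (simp add: midpoint_def scaleR_right_distrib)

lemma closure_image_sequentially:
  fixes f :: "'a \<Rightarrow> 'b::first_countable_topology"
  assumes "y \<in> closure (f ` S)"
  obtains s where "\<And>n. s n \<in> S" "(\<lambda>n. f (s n)) \<longlonglongrightarrow> y"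
proof -
  from assms obtain u where u: "\<forall>n. u n \<in> f ` S" "u \<longlonglongrightarrow> y"
    unfolding closure_sequential by blast
  then have "\<forall>n. \<exists>x. x \<in> S \<and> u n = f x" by blast
  from choice[OF this] obtain s where s: "\<forall>n. s n \<in> S \<and> u n = f (s n)" by blast
  then have "u = (\<lambda>n. f (s n))" by auto
  with u(2) have "(\<lambda>n. f (s n)) \<longlonglongrightarrow> y" by simp
  then show thesis using that s by blast
qed

lemma norm_midpoint_diff_sq:
  fixes a b z :: "'a::real_inner"
  shows "(norm (midpoint a b - z))\<^sup>2 = (norm (a - z))\<^sup>2 / 2 + (norm (b - z))\<^sup>2 / 2 - (norm (a - b))\<^sup>2 / 4"
proof -
  have "midpoint a b - z = (1/2) *\<^sub>R ((a - z) + (b - z))" and "a - b = (a - z) - (b - z)"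
    by (simp_all add: midpoint_def algebra_simps flip: scaleR_2)
  then show ?thesis
    unfolding power2_norm_eq_inner
    by (simp add: inner_add_left inner_add_right inner_diff_left inner_diff_right
        inner_commute[of "b - z"] field_simps)
qed

text \<open>Completeness enters here: a minimizing sequence of a function that is strongly convex
  along midpoints is Cauchy.\<close>

lemma strongly_midconvex_attains_min:
  fixes C :: "'a::{real_inner,complete_space} set" and F :: "'a \<Rightarrow> real"
  assumes C: "closed C" "C \<noteq> {}" and F_cont: "continuous_on C F" and F_bdd: "bdd_below (F ` C)"
    and \<kappa>: "\<kappa> > 0"
    and midconvex: "\<And>a b. a \<in> C \<Longrightarrow> b \<in> C \<Longrightarrow>
        midpoint a b \<in> C \<and> F (midpoint a b) \<le> (F a + F b) / 2 - \<kappa> * (norm (a - b))\<^sup>2"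
  shows "\<exists>x\<in>C. \<forall>y\<in>C. F x \<le> F y"
proof -
  define m where "m = Inf (F ` C)"
  have m_le: "m \<le> F y" if "y \<in> C" for y
    unfolding m_def using F_bdd that by (simp add: cInf_lower)
  have "m \<in> closure (F ` C)"
    unfolding m_def using C(2) F_bdd by (intro closure_contains_Inf) auto
  then obtain u where u: "\<And>n. u n \<in> C" "(\<lambda>n. F (u n)) \<longlonglongrightarrow> m"
    by (rule closure_image_sequentially) blast
  have gap: "(\<lambda>n. F (u n) - m) \<longlonglongrightarrow> 0"
    using tendsto_diff[OF u(2) tendsto_const[of m]] by simp
  have dist_sq: "\<kappa> * (norm (u i - u j))\<^sup>2 \<le> ((F (u i) - m) + (F (u j) - m)) / 2" for i j
  proof -
    have "m \<le> F (midpoint (u i) (u j))" using midconvex[OF u(1) u(1)] m_le by blast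
    then show ?thesis using conjunct2[OF midconvex[OF u(1) u(1), of i j]] by (simp add: field_simps)
  qed
  have "Cauchy u"
  proof (rule metric_CauchyI)
    fix e :: real assume e: "e > 0"
    then have pos: "\<kappa> * e\<^sup>2 / 2 > 0" using \<kappa> by simp
    obtain N where N: "\<And>n. n \<ge> N \<Longrightarrow> \<bar>F (u n) - m\<bar> < \<kappa> * e\<^sup>2 / 2"
      using LIMSEQ_D[OF gap pos] by auto
    have "dist (u i) (u j) < e" if "i \<ge> N" "j \<ge> N" for i j
    proof -
      have "F (u i) - m < \<kappa> * e\<^sup>2 / 2" "F (u j) - m < \<kappa> * e\<^sup>2 / 2"
        using N[OF that(1)] N[OF that(2)] by (auto simp only: abs_less_iff)
      then have "\<kappa> * (norm (u i - u j))\<^sup>2 < \<kappa> * e\<^sup>2"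
        using dist_sq[of i j] pos by argo
      then have "(norm (u i - u j))\<^sup>2 < e\<^sup>2" using \<kappa> by simp
      then show ?thesis using e by (simp add: dist_norm power2_less_imp_less)
    qed
    then show "\<exists>M. \<forall>i\<ge>M. \<forall>j\<ge>M. dist (u i) (u j) < e" by blast
  qed
  then obtain x where x: "u \<longlonglongrightarrow> x" using Cauchy_convergent convergent_def by blast
  have "x \<in> C" using closed_sequentially[OF C(1) u(1) x] .
  moreover have "(\<lambda>n. F (u n)) \<longlonglongrightarrow> F x"
    using continuous_on_tendsto_compose[OF F_cont x \<open>x \<in> C\<close>] u(1) by simp
  then have "F x = m" using u(2) LIMSEQ_unique by blast
  ultimately show ?thesis using m_le by auto
qed

lemma proj_exists:
  fixes C :: "'a::{real_inner,complete_space} set"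
  assumes "closed C" "convex C" "C \<noteq> {}"
  shows "\<exists>p\<in>C. \<forall>y\<in>C. dist z p \<le> dist z y"
proof -
  have "\<exists>p\<in>C. \<forall>y\<in>C. (norm (p - z))\<^sup>2 \<le> (norm (y - z))\<^sup>2"
  proof (rule strongly_midconvex_attains_min[where \<kappa> = "1/4"])
    show "bdd_below ((\<lambda>x. (norm (x - z))\<^sup>2) ` C)" by (auto intro: bdd_belowI[of _ 0])
    fix a b assume "a \<in> C" "b \<in> C"
    then show "midpoint a b \<in> C \<and> (norm (midpoint a b - z))\<^sup>2
        \<le> ((norm (a - z))\<^sup>2 + (norm (b - z))\<^sup>2) / 2 - 1/4 * (norm (a - b))\<^sup>2"
      using midpoint_in_convex[OF assms(2)] by (simp add: norm_midpoint_diff_sq)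
  qed (use assms in \<open>auto intro!: continuous_intros\<close>)
  then show ?thesis
    by (metis dist_norm norm_minus_commute norm_ge_zero power2_le_imp_le)
qed

lemma
  fixes C :: "'a::{real_inner,complete_space} set"
  assumes "closed C" "convex C" "C \<noteq> {}"
  shows proj_in: "proj C z \<in> C"
    and proj_le_dist: "y \<in> C \<Longrightarrow> dist z (proj C z) \<le> dist z y"
    and proj_inner_le: "y \<in> C \<Longrightarrow> inner (z - proj C z) (y - proj C z) \<le> 0"
proof -
  have *: "proj C z \<in> C \<and> (\<forall>y\<in>C. dist z (proj C z) \<le> dist z y)"
    unfolding proj_def by (rule someI_ex) (use proj_exists[OF assms] in blast)
  then show "proj C z \<in> C" "y \<in> C \<Longrightarrow> dist z (proj C z) \<le> dist z y" by auto
  show "y \<in> C \<Longrightarrow> inner (z - proj C z) (y - proj C z) \<le> 0"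
    using * any_closest_point_dot[OF assms(2,1)] by blast
qed

text \<open>The parallelogram law at the midpoint of the two projections.\<close>

lemma norm_proj_diff_le:
  fixes C C' :: "'a::{real_inner,complete_space} set"
  assumes C: "closed C" "convex C" and C': "closed C'" "convex C'" "C' \<noteq> {}" and "C' \<subseteq> C"
    and \<delta>: "dist z (proj C' z) \<le> \<delta>"
  shows "norm (proj C z - proj C' z) \<le> sqrt (2 * (\<delta>\<^sup>2 - (dist z (proj C z))\<^sup>2))"
proof -
  have C_ne: "C \<noteq> {}" using C'(3) \<open>C' \<subseteq> C\<close> by blast
  let ?a = "proj C z" and ?b = "proj C' z"
  have "?a \<in> C" "?b \<in> C" using proj_in[OF C C_ne] proj_in[OF C'] \<open>C' \<subseteq> C\<close> by auto
  then have "dist z ?a \<le> dist z (midpoint ?a ?b)"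
    using proj_le_dist[OF C C_ne] midpoint_in_convex[OF C(2)] by blast
  then have "(norm (?a - z))\<^sup>2 \<le> (norm (midpoint ?a ?b - z))\<^sup>2"
    by (simp add: dist_norm norm_minus_commute power_mono)
  then have "(norm (?a - ?b))\<^sup>2 \<le> 2 * ((dist z ?b)\<^sup>2 - (dist z ?a)\<^sup>2)"
    unfolding norm_midpoint_diff_sq by (simp add: dist_norm norm_minus_commute)
  also have "\<dots> \<le> 2 * (\<delta>\<^sup>2 - (dist z ?a)\<^sup>2)" using \<delta> by (simp add: power_mono)
  finally show ?thesis by (simp add: real_le_rsqrt)
qed

lemma Cauchy_if_dist_le_add:
  fixes p :: "nat \<Rightarrow> 'a::metric_space"
  assumes g: "g \<longlonglongrightarrow> 0" and dist_le: "\<And>n m. dist (p n) (p m) \<le> g n + g m"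
  shows "Cauchy p"
proof (rule metric_CauchyI)
  fix e :: real assume "e > 0"
  then obtain N where N: "\<And>n. n \<ge> N \<Longrightarrow> \<bar>g n\<bar> < e / 2"
    using LIMSEQ_D[OF g, of "e/2"] by auto
  have "dist (p m) (p n) < e" if "m \<ge> N" "n \<ge> N" for m n
    using dist_le[of m n] N[OF that(1)] N[OF that(2)] by linarith
  then show "\<exists>M. \<forall>m\<ge>M. \<forall>n\<ge>M. dist (p m) (p n) < e" by blast
qed

text \<open>A substitute for weak compactness of balls. The common point is the limit of the projections
  of \<open>z\<close> onto members whose distance from \<open>z\<close> approaches the supremum.\<close>

lemma directed_closed_convex_Inter_nonempty:
  fixes Fam :: "'a::{real_inner,complete_space} set set" and z :: 'a
  assumes cc: "\<And>C. C \<in> Fam \<Longrightarrow> closed C \<and> convex C \<and> C \<noteq> {}"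
    and directed: "\<And>C1 C2. C1 \<in> Fam \<Longrightarrow> C2 \<in> Fam \<Longrightarrow> \<exists>C3\<in>Fam. C3 \<subseteq> C1 \<inter> C2"
    and bounded: "\<And>C. C \<in> Fam \<Longrightarrow> \<exists>x\<in>C. dist z x \<le> R"
    and "Fam \<noteq> {}"
  shows "\<exists>q. \<forall>C\<in>Fam. q \<in> C"
proof -
  define d where "d C = dist z (proj C z)" for C
  have proj_mem: "proj C z \<in> C" if "C \<in> Fam" for C using proj_in cc[OF that] by blast
  have d_le: "d C \<le> dist z y" if "C \<in> Fam" "y \<in> C" for C y
    unfolding d_def using proj_le_dist cc[OF that(1)] that(2) by blast
  have "d C \<le> R" if C: "C \<in> Fam" for C
  proof -
    obtain y where "y \<in> C" "dist z y \<le> R" using bounded[OF C] by blast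
    then show ?thesis using d_le[OF C \<open>y \<in> C\<close>] by linarith
  qed
  then have bdd: "bdd_above (d ` Fam)" by (rule bdd_aboveI2)
  define \<delta> where "\<delta> = Sup (d ` Fam)"
  have d_le_\<delta>: "d C \<le> \<delta>" if "C \<in> Fam" for C unfolding \<delta>_def using bdd that by (simp add: cSup_upper)
  have "\<delta> \<in> closure (d ` Fam)"
    unfolding \<delta>_def using \<open>Fam \<noteq> {}\<close> bdd by (intro closure_contains_Sup) auto
  then obtain Cs where Cs: "\<And>n. Cs n \<in> Fam" "(\<lambda>n. d (Cs n)) \<longlonglongrightarrow> \<delta>"
    by (rule closure_image_sequentially) blast
  define g where "g n = sqrt (2 * (\<delta>\<^sup>2 - (d (Cs n))\<^sup>2))" for n
  have g: "g \<longlonglongrightarrow> 0"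
    using tendsto_real_sqrt[OF tendsto_mult[OF tendsto_const[of 2]
          tendsto_diff[OF tendsto_const[of "\<delta>\<^sup>2"] tendsto_power[OF Cs(2), of 2]]]]
    unfolding g_def[abs_def] by simp
  have close: "norm (proj (Cs n) z - proj C z) \<le> g n" if "C \<in> Fam" "C \<subseteq> Cs n" for n C
    unfolding g_def d_def using cc[OF Cs(1)] cc[OF that(1)] that(2) d_le_\<delta>[OF that(1)]
    by (intro norm_proj_diff_le) (auto simp: d_def)
  define p where "p n = proj (Cs n) z" for n
  have "Cauchy p"
  proof (rule Cauchy_if_dist_le_add[OF g])
    fix n m
    obtain C where C: "C \<in> Fam" "C \<subseteq> Cs n \<inter> Cs m" using directed[OF Cs(1) Cs(1)] by blast
    then have "norm (p n - proj C z) \<le> g n" "norm (p m - proj C z) \<le> g m"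
      using close unfolding p_def by auto
    then show "dist (p n) (p m) \<le> g n + g m"
      using dist_triangle2[of "p n" "p m" "proj C z"] unfolding dist_norm by linarith
  qed
  then obtain q where q: "p \<longlonglongrightarrow> q" using Cauchy_convergent convergent_def by blast
  have "q \<in> C" if C: "C \<in> Fam" for C
  proof -
    have "\<forall>n. \<exists>F. F \<in> Fam \<and> F \<subseteq> Cs n \<inter> C" using directed[OF Cs(1) C] by blast
    then obtain F where F: "\<And>n. F n \<in> Fam" "\<And>n. F n \<subseteq> Cs n \<inter> C"
      by (metis (no_types) choice)
    have "\<forall>n. norm (p n - proj (F n) z) \<le> g n" using close F unfolding p_def by simp
    then have "(\<lambda>n. p n - proj (F n) z) \<longlonglongrightarrow> 0"
      by (rule Lim_null_comparison[OF always_eventually g])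
    from tendsto_diff[OF q this] have lim: "(\<lambda>n. proj (F n) z) \<longlonglongrightarrow> q" by simp
    have mem: "proj (F n) z \<in> C" for n using proj_mem[OF F(1)] F(2) by blast
    show "q \<in> C" using closed_sequentially[OF _ mem lim] cc[OF C] by blast
  qed
  then show ?thesis by blast
qed

lemma closed_convex_fip_Inter_nonempty:
  fixes \<K> :: "'a::{real_inner,complete_space} set set"
  assumes cc: "\<And>C. C \<in> \<K> \<Longrightarrow> closed C \<and> convex C" and K0: "K0 \<in> \<K>" "bounded K0"
    and fip: "\<And>\<F>. finite \<F> \<Longrightarrow> \<F> \<subseteq> \<K> \<Longrightarrow> \<Inter>(insert K0 \<F>) \<noteq> {}"
  shows "\<Inter>\<K> \<noteq> {}"
proof -
  obtain z R where R: "\<And>y. y \<in> K0 \<Longrightarrow> dist z y \<le> R" using K0(2) unfolding bounded_def by blast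
  define Fam where "Fam = {\<Inter>(insert K0 \<F>) | \<F>. finite \<F> \<and> \<F> \<subseteq> \<K>}"
  have in_Fam: "\<Inter>(insert K0 \<F>) \<in> Fam" if "finite \<F>" "\<F> \<subseteq> \<K>" for \<F>
    unfolding Fam_def using that by blast
  have "\<exists>q. \<forall>C\<in>Fam. q \<in> C"
  proof (rule directed_closed_convex_Inter_nonempty[where z = z and R = R])
    fix C assume "C \<in> Fam"
    then obtain \<F> where \<F>: "finite \<F>" "\<F> \<subseteq> \<K>" "C = \<Inter>(insert K0 \<F>)" unfolding Fam_def by blast
    have members: "closed C' \<and> convex C'" if "C' \<in> insert K0 \<F>" for C'
      using that cc K0(1) \<F>(2) by blast
    have "closed C" unfolding \<F>(3) using members by (intro closed_Inter) blast
    moreover have "convex C" unfolding \<F>(3) using members by (intro convex_Inter) blast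
    moreover obtain y where y: "y \<in> C" using fip[OF \<F>(1,2)] \<F>(3) by blast
    ultimately show "closed C \<and> convex C \<and> C \<noteq> {}" by blast
    have "y \<in> K0" using y \<F>(3) by blast
    then show "\<exists>y\<in>C. dist z y \<le> R" using R y by blast
  next
    fix C1 C2 assume "C1 \<in> Fam" "C2 \<in> Fam"
    then obtain \<F>1 \<F>2 where \<F>: "finite \<F>1" "\<F>1 \<subseteq> \<K>" "C1 = \<Inter>(insert K0 \<F>1)"
      "finite \<F>2" "\<F>2 \<subseteq> \<K>" "C2 = \<Inter>(insert K0 \<F>2)"
      unfolding Fam_def by blast
    have "\<Inter>(insert K0 (\<F>1 \<union> \<F>2)) \<in> Fam" using \<F> by (intro in_Fam) auto
    moreover have "\<Inter>(insert K0 (\<F>1 \<union> \<F>2)) \<subseteq> C1 \<inter> C2" unfolding \<F>(3,6) by blast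
    ultimately show "\<exists>C3\<in>Fam. C3 \<subseteq> C1 \<inter> C2" by blast
  next
    show "Fam \<noteq> {}" using in_Fam[of "{}"] by blast
  qed
  then obtain q where q: "\<forall>C\<in>Fam. q \<in> C" by blast
  have "q \<in> C" if "C \<in> \<K>" for C
  proof -
    have "\<Inter>(insert K0 {C}) \<in> Fam" using that by (intro in_Fam) auto
    with q have "q \<in> \<Inter>(insert K0 {C})" by (rule bspec)
    then show ?thesis by simp
  qed
  then show ?thesis by blast
qed

section \<open>The Debrunner--Flor lemma and Minty's theorem\<close>

definition monotone_set :: "('a::real_inner \<times> 'a) set \<Rightarrow> bool" where
  "monotone_set G \<longleftrightarrow> (\<forall>p\<in>G. \<forall>q\<in>G. 0 \<le> inner (snd p - snd q) (fst p - fst q))"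

text \<open>For \<open>p = (y, w)\<close>, the pair \<open>(x, -x)\<close> is monotonically related to \<open>p\<close> iff
  \<open>antidiag_defect p x \<le> 0\<close>.\<close>

definition antidiag_defect :: "'a::real_inner \<times> 'a \<Rightarrow> 'a \<Rightarrow> real" where
  "antidiag_defect p x = inner (x + snd p) (x - fst p)"

lemma antidiag_defect_eq:
  "antidiag_defect p x = (norm (x - (1/2) *\<^sub>R (fst p - snd p)))\<^sup>2 - (norm (fst p + snd p))\<^sup>2 / 4"
  unfolding antidiag_defect_def power2_norm_eq_inner
  by (simp add: inner_add_left inner_add_right inner_diff_left inner_diff_right inner_commute
      field_simps)

lemma antidiag_defect_shift:
  "antidiag_defect p (x + h) = antidiag_defect p x + inner (2 *\<^sub>R x + snd p - fst p) h + (norm h)\<^sup>2"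
  unfolding antidiag_defect_def power2_norm_eq_inner
  by (simp add: inner_add_left inner_add_right inner_diff_left inner_diff_right inner_commute
      algebra_simps scaleR_2)

lemma antidiag_defect_midpoint:
  "antidiag_defect p (midpoint a b) = (antidiag_defect p a + antidiag_defect p b) / 2 - (norm (a - b))\<^sup>2 / 4"
  unfolding antidiag_defect_eq norm_midpoint_diff_sq by simp

lemma antidiag_defect_le_0_iff:
  "antidiag_defect p x \<le> 0 \<longleftrightarrow> x \<in> cball ((1/2) *\<^sub>R (fst p - snd p)) (norm (fst p + snd p) / 2)"
proof -
  have "antidiag_defect p x \<le> 0 \<longleftrightarrow> (norm (x - (1/2) *\<^sub>R (fst p - snd p)))\<^sup>2 \<le> (norm (fst p + snd p) / 2)\<^sup>2"
    unfolding antidiag_defect_eq by (simp add: power_divide)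
  also have "\<dots> \<longleftrightarrow> norm (x - (1/2) *\<^sub>R (fst p - snd p)) \<le> norm (fst p + snd p) / 2"
    by (simp add: power2_le_iff_abs_le)
  finally show ?thesis by (simp add: dist_norm norm_minus_commute)
qed

lemma inner_sum_le_sum_inner_if_monotone:
  fixes u :: "'i \<Rightarrow> real" and y w :: "'i \<Rightarrow> 'a::real_inner"
  assumes "finite K" and u: "\<forall>i\<in>K. 0 \<le> u i" "sum u K = 1"
    and mono: "\<forall>i\<in>K. \<forall>j\<in>K. 0 \<le> inner (w i - w j) (y i - y j)"
  shows "inner (\<Sum>i\<in>K. u i *\<^sub>R w i) (\<Sum>i\<in>K. u i *\<^sub>R y i) \<le> (\<Sum>i\<in>K. u i * inner (w i) (y i))"
proof -
  define S where "S = (\<Sum>i\<in>K. u i * inner (w i) (y i))"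
  define P where "P = inner (\<Sum>i\<in>K. u i *\<^sub>R w i) (\<Sum>i\<in>K. u i *\<^sub>R y i)"
  have diag1: "(\<Sum>i\<in>K. \<Sum>j\<in>K. u i * u j * inner (w i) (y i)) = S"
  proof -
    have "(\<Sum>i\<in>K. \<Sum>j\<in>K. u i * u j * inner (w i) (y i)) = (\<Sum>i\<in>K. u i * inner (w i) (y i) * sum u K)"
      by (simp add: sum_distrib_left sum_distrib_right mult_ac)
    then show ?thesis using u(2) by (simp add: S_def)
  qed
  have diag2: "(\<Sum>i\<in>K. \<Sum>j\<in>K. u i * u j * inner (w j) (y j)) = S"
    using diag1 by (subst sum.swap) (simp add: mult_ac)
  have cross1: "(\<Sum>i\<in>K. \<Sum>j\<in>K. u i * u j * inner (w j) (y i)) = P"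
    unfolding P_def by (simp add: inner_sum_left inner_sum_right sum_distrib_left mult.assoc)
  have cross2: "(\<Sum>i\<in>K. \<Sum>j\<in>K. u i * u j * inner (w i) (y j)) = P"
    unfolding cross1[symmetric] by (subst sum.swap) (simp add: mult.commute)
  have "0 \<le> (\<Sum>i\<in>K. \<Sum>j\<in>K. u i * u j * inner (w i - w j) (y i - y j))"
    using u(1) mono by (intro sum_nonneg mult_nonneg_nonneg) auto
  also have "\<dots> = (\<Sum>i\<in>K. \<Sum>j\<in>K. u i * u j * inner (w i) (y i))
      - (\<Sum>i\<in>K. \<Sum>j\<in>K. u i * u j * inner (w i) (y j))
      - (\<Sum>i\<in>K. \<Sum>j\<in>K. u i * u j * inner (w j) (y i))
      + (\<Sum>i\<in>K. \<Sum>j\<in>K. u i * u j * inner (w j) (y j))"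
    by (simp add: inner_diff_left inner_diff_right algebra_simps sum_subtractf sum.distrib)
  also have "\<dots> = 2 * S - 2 * P" unfolding diag1 diag2 cross1 cross2 by simp
  finally show ?thesis unfolding S_def P_def by simp
qed

lemma convex_combination_antidiag_defect_le_0:
  fixes P :: "'i \<Rightarrow> 'a::real_inner \<times> 'a"
  assumes G: "monotone_set G" and "finite K" and u: "\<forall>k\<in>K. 0 \<le> u k" "sum u K = 1"
    and P: "\<forall>k\<in>K. P k \<in> G"
    and stationary: "(\<Sum>k\<in>K. u k *\<^sub>R (2 *\<^sub>R x + snd (P k) - fst (P k))) = 0"
  shows "(\<Sum>k\<in>K. u k * antidiag_defect (P k) x) \<le> 0"
proof -
  define Y where "Y = (\<Sum>k\<in>K. u k *\<^sub>R fst (P k))"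
  define V where "V = (\<Sum>k\<in>K. u k *\<^sub>R snd (P k))"
  have "(\<Sum>k\<in>K. u k *\<^sub>R (2 *\<^sub>R x)) = 2 *\<^sub>R x"
    using scaleR_sum_left[of u K "2 *\<^sub>R x", symmetric] u(2) by simp
  then have "0 = 2 *\<^sub>R x + V - Y"
    unfolding stationary[symmetric] V_def Y_def
    by (simp add: scaleR_add_right scaleR_diff_right sum.distrib sum_subtractf)
  then have x: "x = (1/2) *\<^sub>R (Y - V)" by (simp add: algebra_simps)
  have "(\<Sum>k\<in>K. u k * antidiag_defect (P k) x)
      = (\<Sum>k\<in>K. u k * ((norm x)\<^sup>2 + inner x (snd (P k) - fst (P k)))) - (\<Sum>k\<in>K. u k * inner (snd (P k)) (fst (P k)))"
    unfolding antidiag_defect_def power2_norm_eq_inner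
    by (simp add: inner_add_left inner_diff_right inner_diff_left inner_commute algebra_simps
        sum_subtractf sum.distrib)
  also have "(\<Sum>k\<in>K. u k * ((norm x)\<^sup>2 + inner x (snd (P k) - fst (P k)))) = (norm x)\<^sup>2 + inner x (V - Y)"
    using u(2) unfolding V_def Y_def
    by (simp add: algebra_simps sum.distrib inner_sum_right sum_subtractf flip: sum_distrib_right)
  finally have sum_eq: "(\<Sum>k\<in>K. u k * antidiag_defect (P k) x)
      = (norm x)\<^sup>2 + inner x (V - Y) - (\<Sum>k\<in>K. u k * inner (snd (P k)) (fst (P k)))" .
  have "inner V Y \<le> (\<Sum>k\<in>K. u k * inner (snd (P k)) (fst (P k)))"
    unfolding V_def Y_def using G P \<open>finite K\<close> u unfolding monotone_set_def
    by (intro inner_sum_le_sum_inner_if_monotone) auto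
  moreover have "(norm x)\<^sup>2 + inner x (V - Y) - inner V Y = - (norm (Y + V))\<^sup>2 / 4"
    unfolding x power2_norm_eq_inner
    by (simp add: inner_add_left inner_add_right inner_diff_left inner_diff_right inner_commute algebra_simps)
  ultimately show ?thesis unfolding sum_eq using zero_le_power2[of "norm (Y + V)"] by argo
qed

lemma continuous_on_Max_image:
  assumes "finite S" "S \<noteq> {}" "\<And>p. p \<in> S \<Longrightarrow> continuous_on U (f p)"
  shows "continuous_on U (\<lambda>x. Max ((\<lambda>p. f p x) ` S) :: real)"
  using assms
proof (induction S rule: finite_ne_induct)
  case (insert p S)
  then have "continuous_on U (\<lambda>x. max (f p x) (Max ((\<lambda>p. f p x) ` S)))"
    by (intro continuous_on_max) auto
  then show ?case using insert by simp
qed simp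

lemma Max_antidiag_defect_attains_min:
  fixes G :: "('a::{real_inner,complete_space} \<times> 'a) set"
  assumes "finite G" "G \<noteq> {}"
  shows "\<exists>x. \<forall>y. Max ((\<lambda>p. antidiag_defect p x) ` G) \<le> Max ((\<lambda>p. antidiag_defect p y) ` G)"
proof -
  define F where "F x = Max ((\<lambda>p. antidiag_defect p x) ` G)" for x
  have F_ge: "antidiag_defect p x \<le> F x" if "p \<in> G" for p x
    unfolding F_def using assms(1) that by simp
  obtain p0 where p0: "p0 \<in> G" using assms(2) by blast
  have "\<exists>x\<in>UNIV. \<forall>y\<in>UNIV. F x \<le> F y"
  proof (rule strongly_midconvex_attains_min[where \<kappa> = "1/4"])
    have "continuous_on UNIV (\<lambda>x. antidiag_defect p x)" for p
      unfolding antidiag_defect_def by (intro continuous_intros)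
    then show "continuous_on UNIV F"
      unfolding F_def using assms by (intro continuous_on_Max_image) auto
    have "- (norm (fst p0 + snd p0))\<^sup>2 / 4 \<le> F x" for x
      using F_ge[OF p0, of x] zero_le_power2[of "norm (x - (1/2) *\<^sub>R (fst p0 - snd p0))"]
      unfolding antidiag_defect_eq by linarith
    then show "bdd_below (F ` UNIV)" by (meson bdd_belowI2)
    fix a b :: 'a
    have "F (midpoint a b) \<le> (F a + F b) / 2 - 1/4 * (norm (a - b))\<^sup>2"
      unfolding F_def[of "midpoint a b"]
    proof (rule Max.boundedI)
      show "finite ((\<lambda>p. antidiag_defect p (midpoint a b)) ` G)" using assms(1) by simp
      show "(\<lambda>p. antidiag_defect p (midpoint a b)) ` G \<noteq> {}" using assms(2) by simp
      fix t assume "t \<in> (\<lambda>p. antidiag_defect p (midpoint a b)) ` G"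
      then obtain p where p: "p \<in> G" "t = antidiag_defect p (midpoint a b)" by blast
      show "t \<le> (F a + F b) / 2 - 1/4 * (norm (a - b))\<^sup>2"
        unfolding p(2) antidiag_defect_midpoint using F_ge[OF p(1), of a] F_ge[OF p(1), of b] by simp
    qed
    then show "midpoint a b \<in> UNIV \<and> F (midpoint a b) \<le> (F a + F b) / 2 - 1/4 * (norm (a - b))\<^sup>2"
      by simp
  qed auto
  then show ?thesis unfolding F_def by blast
qed

text \<open>A step along \<open>-\<omega>\<close> decreases every active term of the maximum to first order, and
  for small steps keeps the inactive ones below the maximum.\<close>

lemma Max_antidiag_defect_descent:
  fixes G :: "('a::real_inner \<times> 'a) set"
  defines "F \<equiv> \<lambda>x. Max ((\<lambda>p. antidiag_defect p x) ` G)"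
  assumes G: "finite G" "G \<noteq> {}" and "\<omega> \<noteq> 0"
    and descent: "\<And>p. p \<in> G \<Longrightarrow> antidiag_defect p x = F x \<Longrightarrow> (norm \<omega>)\<^sup>2 \<le> inner (2 *\<^sub>R x + snd p - fst p) \<omega>"
  shows "\<exists>t. F (x - t *\<^sub>R \<omega>) < F x"
proof -
  have F_ge: "antidiag_defect p y \<le> F y" if "p \<in> G" for p y
    unfolding F_def using G(1) that by simp
  have \<omega>_pos: "(norm \<omega>)\<^sup>2 > 0" using \<open>\<omega> \<noteq> 0\<close> by simp
  have step: "antidiag_defect p (x - t *\<^sub>R \<omega>)
      = antidiag_defect p x - t * inner (2 *\<^sub>R x + snd p - fst p) \<omega> + t\<^sup>2 * (norm \<omega>)\<^sup>2" for p t
    using antidiag_defect_shift[of p x "- (t *\<^sub>R \<omega>)"] by (simp add: power_mult_distrib)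
  have "\<forall>\<^sub>F t in at_right (0::real). antidiag_defect p (x - t *\<^sub>R \<omega>) < F x" if p: "p \<in> G" for p
  proof (cases "antidiag_defect p x = F x")
    case True
    have "\<forall>\<^sub>F t in at_right (0::real). 0 < t \<and> t < 1"
      unfolding eventually_at_right_field by (intro exI[of _ 1]) auto
    then show ?thesis
    proof (rule eventually_mono)
      fix t :: real assume t: "0 < t \<and> t < 1"
      have "t * (norm \<omega>)\<^sup>2 < (norm \<omega>)\<^sup>2"
        using mult_strict_right_mono[of t 1 "(norm \<omega>)\<^sup>2"] t \<omega>_pos by simp
      then have "t\<^sup>2 * (norm \<omega>)\<^sup>2 < t * (norm \<omega>)\<^sup>2"
        using mult_strict_left_mono[of "t * (norm \<omega>)\<^sup>2" "(norm \<omega>)\<^sup>2" t] t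
        by (simp add: power2_eq_square mult.assoc)
      moreover have "t * (norm \<omega>)\<^sup>2 \<le> t * inner (2 *\<^sub>R x + snd p - fst p) \<omega>"
        using descent[OF p True] t by simp
      ultimately show "antidiag_defect p (x - t *\<^sub>R \<omega>) < F x" unfolding step True by linarith
    qed
  next
    case False
    then have "antidiag_defect p x < F x" using F_ge[OF p, of x] by auto
    moreover have "((\<lambda>t. antidiag_defect p x - t * inner (2 *\<^sub>R x + snd p - fst p) \<omega> + t\<^sup>2 * (norm \<omega>)\<^sup>2)
        \<longlongrightarrow> antidiag_defect p x - 0 * inner (2 *\<^sub>R x + snd p - fst p) \<omega> + 0\<^sup>2 * (norm \<omega>)\<^sup>2) (at_right 0)"
      by (intro tendsto_intros)
    ultimately show ?thesis unfolding step using order_tendstoD(2) by fastforce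
  qed
  then have "\<forall>\<^sub>F t in at_right (0::real). \<forall>p\<in>G. antidiag_defect p (x - t *\<^sub>R \<omega>) < F x"
    using G(1) by (simp add: eventually_ball_finite)
  then obtain t :: real where "\<forall>p\<in>G. antidiag_defect p (x - t *\<^sub>R \<omega>) < F x"
    using eventually_happens[of _ "at_right (0::real)"] by auto
  then have "F (x - t *\<^sub>R \<omega>) < F x" unfolding F_def using G by simp
  then show ?thesis by blast
qed

text \<open>First-order optimality for a maximum of finitely many quadratics: otherwise the
  projection \<open>\<omega>\<close> of \<open>0\<close> onto the hull of the active gradients is a descent direction.\<close>

lemma Max_antidiag_defect_min_stationary:
  fixes G :: "('a::{real_inner,complete_space} \<times> 'a) set"
  defines "F \<equiv> \<lambda>x. Max ((\<lambda>p. antidiag_defect p x) ` G)"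
  assumes G: "finite G" "G \<noteq> {}" and min: "\<And>y. F x \<le> F y"
  shows "0 \<in> convex hull ((\<lambda>p. 2 *\<^sub>R x + snd p - fst p) ` {p\<in>G. antidiag_defect p x = F x})"
proof -
  define I where "I = {p\<in>G. antidiag_defect p x = F x}"
  define grad where "grad = (\<lambda>p. 2 *\<^sub>R x + snd p - fst p)"
  define W where "W = convex hull (grad ` I)"
  have "F x \<in> (\<lambda>p. antidiag_defect p x) ` G" unfolding F_def using G by (intro Max_in) auto
  then obtain p where "F x = antidiag_defect p x" "p \<in> G" by (rule imageE)
  then have "p \<in> I" unfolding I_def by simp
  then have "I \<noteq> {}" by blast
  then have W: "closed W" "convex W" "W \<noteq> {}"
    unfolding W_def using G(1) unfolding I_def
    by (auto simp: compact_imp_closed finite_imp_compact_convex_hull convex_convex_hull)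
  define \<omega> where "\<omega> = proj W 0"
  have descent: "(norm \<omega>)\<^sup>2 \<le> inner (grad p) \<omega>" if "p \<in> G" "antidiag_defect p x = F x" for p
  proof -
    have "grad p \<in> W" unfolding W_def I_def using that by (simp add: hull_inc)
    then have "inner (0 - \<omega>) (grad p - \<omega>) \<le> 0" unfolding \<omega>_def by (rule proj_inner_le[OF W])
    then show ?thesis by (simp add: inner_diff_right inner_commute power2_norm_eq_inner)
  qed
  have "\<omega> = 0"
  proof (rule ccontr)
    assume "\<omega> \<noteq> 0"
    from Max_antidiag_defect_descent[OF G this] descent
    obtain t where "F (x - t *\<^sub>R \<omega>) < F x" unfolding F_def grad_def by blast
    then show False using min[of "x - t *\<^sub>R \<omega>"] by simp
  qed
  moreover have "\<omega> \<in> W" unfolding \<omega>_def by (rule proj_in[OF W])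
  ultimately show ?thesis unfolding W_def I_def grad_def by simp
qed

lemma finite_monotone_set_antidiag_related:
  fixes G :: "('a::{real_inner,complete_space} \<times> 'a) set"
  assumes G: "finite G" "monotone_set G"
  shows "\<exists>x. \<forall>p\<in>G. antidiag_defect p x \<le> 0"
proof (cases "G = {}")
  case False
  define F where "F x = Max ((\<lambda>p. antidiag_defect p x) ` G)" for x
  have F_ge: "antidiag_defect p y \<le> F y" if "p \<in> G" for p y
    unfolding F_def using G(1) that by simp
  obtain x where min: "\<And>y. F x \<le> F y"
    using Max_antidiag_defect_attains_min[OF G(1) False] unfolding F_def by blast
  define I where "I = {p\<in>G. antidiag_defect p x = F x}"
  define grad where "grad = (\<lambda>p. 2 *\<^sub>R x + snd p - fst p)"
  have "0 \<in> convex hull (grad ` I)"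
    unfolding I_def F_def grad_def
    by (rule Max_antidiag_defect_min_stationary[OF G(1) False]) (use min in \<open>simp add: F_def\<close>)
  then obtain k u z where kuz: "\<forall>i\<in>{1::nat..k}. 0 \<le> u i \<and> z i \<in> grad ` I"
    "sum u {1..k} = 1" "(\<Sum>i = 1..k. u i *\<^sub>R z i) = 0"
    unfolding convex_hull_indexed mem_Collect_eq by blast
  have "\<forall>i\<in>{1..k}. \<exists>p\<in>I. z i = grad p" using kuz(1) by blast
  then obtain P where P: "\<And>i. i \<in> {1..k} \<Longrightarrow> P i \<in> I \<and> z i = grad (P i)" by metis
  have "F x = (\<Sum>i = 1..k. u i * antidiag_defect (P i) x)"
  proof -
    have "(\<Sum>i = 1..k. u i * antidiag_defect (P i) x) = (\<Sum>i = 1..k. u i * F x)"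
      using P unfolding I_def by (intro sum.cong) auto
    then show ?thesis using kuz(2) by (simp flip: sum_distrib_right)
  qed
  also have "\<dots> \<le> 0"
  proof (rule convex_combination_antidiag_defect_le_0[OF G(2)])
    show "\<forall>i\<in>{1..k}. P i \<in> G" using P unfolding I_def by blast
    have "(\<Sum>i = 1..k. u i *\<^sub>R z i) = (\<Sum>i = 1..k. u i *\<^sub>R grad (P i))"
      using P by (intro sum.cong) auto
    then show "(\<Sum>i = 1..k. u i *\<^sub>R (2 *\<^sub>R x + snd (P i) - fst (P i))) = 0"
      using kuz(3) unfolding grad_def by simp
  qed (use kuz in auto)
  finally show ?thesis using F_ge by (meson order_trans)
qed simp

text \<open>The Debrunner--Flor lemma for the map \<open>-I\<close>: by the finite case, the closed balls
  \<open>{x. antidiag_defect p x \<le> 0}\<close> have the finite intersection property.\<close>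

lemma monotone_set_antidiag_related:
  fixes G :: "('a::{real_inner,complete_space} \<times> 'a) set"
  assumes G: "monotone_set G"
  shows "\<exists>x. \<forall>p\<in>G. antidiag_defect p x \<le> 0"
proof (cases "G = {}")
  case False
  then obtain p0 where p0: "p0 \<in> G" by blast
  define K where "K p = {x. antidiag_defect p x \<le> 0}" for p :: "'a \<times> 'a"
  have K_ball: "K p = cball ((1/2) *\<^sub>R (fst p - snd p)) (norm (fst p + snd p) / 2)" for p
    unfolding K_def antidiag_defect_le_0_iff by blast
  have "\<Inter>(K ` G) \<noteq> {}"
  proof (rule closed_convex_fip_Inter_nonempty)
    show "closed C \<and> convex C" if "C \<in> K ` G" for C using that unfolding K_ball by auto
    show "K p0 \<in> K ` G" "bounded (K p0)" using p0 unfolding K_ball by auto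
    fix \<F> assume "finite \<F>" "\<F> \<subseteq> K ` G"
    then obtain S where S: "S \<subseteq> G" "finite S" "\<F> = K ` S" by (meson finite_subset_image)
    have "insert p0 S \<subseteq> G" using S(1) p0 by blast
    then have "monotone_set (insert p0 S)" using G unfolding monotone_set_def by blast
    moreover have "finite (insert p0 S)" using S(2) by simp
    ultimately obtain x where "\<forall>p\<in>insert p0 S. antidiag_defect p x \<le> 0"
      using finite_monotone_set_antidiag_related by blast
    then show "\<Inter>(insert (K p0) \<F>) \<noteq> {}" unfolding S(3) K_def by blast
  qed
  then show ?thesis unfolding K_def by blast
qed simp

lemma maximal_monotone_monotone:
  assumes "maximal_monotone B" "u \<in> B x" "v \<in> B y"
  shows "0 \<le> inner (u - v) (x - y)"
  using assms unfolding maximal_monotone_def monotone_op_def by blast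

lemma maximal_monotone_maximal:
  assumes "maximal_monotone B" "\<And>y v. v \<in> B y \<Longrightarrow> 0 \<le> inner (u - v) (x - y)"
  shows "u \<in> B x"
  using assms unfolding maximal_monotone_def by blast

text \<open>Minty's theorem: \<open>I + \<sigma>B\<close> is onto, so the resolvent, defined by a definite description,
  solves its equation.\<close>

lemma resolvent_mem:
  fixes B :: "'a::{real_inner,complete_space} \<Rightarrow> 'a set"
  assumes B: "maximal_monotone B" and \<sigma>: "\<sigma> > 0"
  shows "(1/\<sigma>) *\<^sub>R (z - resolvent \<sigma> B z) \<in> B (resolvent \<sigma> B z)"
proof -
  define G where "G = {(y, \<sigma> *\<^sub>R v - z) | y v. v \<in> B y}"
  have "monotone_set G"
    unfolding monotone_set_def G_def
    using maximal_monotone_monotone[OF B] \<sigma> by (auto simp flip: scaleR_diff_right)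
  then obtain x where x: "\<forall>p\<in>G. antidiag_defect p x \<le> 0"
    using monotone_set_antidiag_related by blast
  define u where "u = (1/\<sigma>) *\<^sub>R (z - x)"
  have "u \<in> B x"
  proof (rule maximal_monotone_maximal[OF B])
    fix y v assume "v \<in> B y"
    then have "antidiag_defect (y, \<sigma> *\<^sub>R v - z) x \<le> 0" using x unfolding G_def by blast
    also have "antidiag_defect (y, \<sigma> *\<^sub>R v - z) x = - \<sigma> * inner (u - v) (x - y)"
      unfolding antidiag_defect_def u_def using \<sigma>
      by (simp add: inner_diff_left inner_diff_right inner_add_left algebra_simps)
    finally show "0 \<le> inner (u - v) (x - y)" using \<sigma> by (simp add: zero_le_mult_iff)
  qed
  moreover have "z = x + \<sigma> *\<^sub>R u" unfolding u_def using \<sigma> by simp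
  ultimately have ex: "\<exists>u\<in>B x. z = x + \<sigma> *\<^sub>R u" by blast
  have unique: "x1 = x2" if "u1 \<in> B x1" "z = x1 + \<sigma> *\<^sub>R u1" "u2 \<in> B x2" "z = x2 + \<sigma> *\<^sub>R u2"
    for x1 x2 u1 u2
  proof -
    have x12: "x1 - x2 = - \<sigma> *\<^sub>R (u1 - u2)" using that(2,4) by (simp add: algebra_simps)
    have "0 \<le> inner (u1 - u2) (x1 - x2)" using maximal_monotone_monotone[OF B that(1,3)] .
    also have "\<dots> = - \<sigma> * inner (u1 - u2) (u1 - u2)" unfolding x12 by simp
    finally have "inner (u1 - u2) (u1 - u2) \<le> 0" using \<sigma> by (simp add: mult_le_0_iff)
    then have "inner (u1 - u2) (u1 - u2) = 0" using inner_ge_zero[of "u1 - u2"] by linarith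
    then have "u1 = u2" by simp
    then show ?thesis using that(2,4) by simp
  qed
  have "\<exists>!x. \<exists>u\<in>B x. z = x + \<sigma> *\<^sub>R u" using ex unique by blast
  from theI'[OF this] obtain u' where u': "u' \<in> B (resolvent \<sigma> B z)" "z = resolvent \<sigma> B z + \<sigma> *\<^sub>R u'"
    unfolding resolvent_def by blast
  define r where "r = resolvent \<sigma> B z"
  have "z - r = \<sigma> *\<^sub>R u'" using u'(2) unfolding r_def[symmetric] by simp
  then show ?thesis using u'(1) \<sigma> unfolding r_def[symmetric] by simp
qed

section \<open>Forward--backward steps\<close>

lemma fb_point_mem:
  fixes B :: "'a::{real_inner,complete_space} \<Rightarrow> 'a set"
  assumes "maximal_monotone B" "\<sigma> > 0"
  shows "(1/\<sigma>) *\<^sub>R (x - fb_point A B \<sigma> x) - A x \<in> B (fb_point A B \<sigma> x)"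
  using resolvent_mem[OF assms, of "x - \<sigma> *\<^sub>R A x"] assms(2)
  by (simp add: fb_point_def scaleR_diff_right algebra_simps)

lemma cocoercive_monotone:
  assumes "cocoercive \<beta> F" "\<beta> > 0"
  shows "0 \<le> inner (F x - F y) (x - y)"
proof -
  have "\<beta> * (norm (F x - F y))\<^sup>2 \<le> inner (F x - F y) (x - y)"
    using assms(1) unfolding cocoercive_def by blast
  moreover have "0 \<le> \<beta> * (norm (F x - F y))\<^sup>2" using assms(2) by simp
  ultimately show ?thesis by linarith
qed

lemma cocoercive_lipschitz:
  assumes "cocoercive \<beta> F" "\<beta> > 0"
  shows "\<beta> * norm (F x - F y) \<le> norm (x - y)"
proof (cases "F x = F y")
  case False
  have "\<beta> * (norm (F x - F y))\<^sup>2 \<le> inner (F x - F y) (x - y)"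
    using assms unfolding cocoercive_def by blast
  also have "\<dots> \<le> norm (F x - F y) * norm (x - y)" by (rule norm_cauchy_schwarz)
  finally have "(\<beta> * norm (F x - F y)) * norm (F x - F y) \<le> norm (x - y) * norm (F x - F y)"
    by (simp add: power2_eq_square mult_ac)
  then show ?thesis using False by (simp add: mult_le_cancel_right)
qed simp

lemma cocoercive_uniformly_continuous:
  assumes "cocoercive \<beta> F" "\<beta> > 0"
  shows "uniformly_continuous_on UNIV F"
proof (rule lipschitz_on_uniformly_continuous)
  show "(1/\<beta>)-lipschitz_on UNIV F"
    using cocoercive_lipschitz[OF assms] assms(2)
    by (intro lipschitz_onI) (simp_all add: dist_norm field_simps mult.commute)
qed

lemma uniformly_continuous_chain_bound:
  fixes f :: "'a::real_normed_vector \<Rightarrow> 'b::real_normed_vector"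
  assumes d: "\<And>x y. norm (x - y) < d \<Longrightarrow> norm (f x - f y) < e" and \<eta>: "0 < \<eta>" "\<eta> < d"
  shows "norm (x - y) \<le> real n * \<eta> \<Longrightarrow> norm (f x - f y) \<le> real n * e"
proof (induction n arbitrary: x)
  case (Suc n)
  define m where "m = x + (1 / (real n + 1)) *\<^sub>R (y - x)"
  have "x - m = - ((1 / (real n + 1)) *\<^sub>R (y - x))" unfolding m_def by simp
  then have "norm (x - m) = norm (x - y) / (real n + 1)" by (simp add: norm_minus_commute)
  also have "\<dots> \<le> \<eta>" using Suc.prems by (simp add: divide_le_eq add.commute mult.commute)
  finally have "norm (f x - f m) < e" using d \<eta> by simp
  moreover have "norm (m - y) \<le> real n * \<eta>"
  proof -
    have "m - y = (x - y) - (1 / (real n + 1)) *\<^sub>R (x - y)" unfolding m_def by (simp add: algebra_simps)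
    also have "\<dots> = (1 - 1 / (real n + 1)) *\<^sub>R (x - y)" by (simp add: scaleR_diff_left)
    also have "1 - 1 / (real n + 1) = real n / (real n + 1)" by (simp add: field_simps)
    finally have "norm (m - y) = real n / (real n + 1) * norm (x - y)" by simp
    also have "\<dots> \<le> real n / (real n + 1) * ((real n + 1) * \<eta>)"
      using Suc.prems by (intro mult_left_mono) (auto simp: add.commute)
    finally show ?thesis by simp
  qed
  then have "norm (f m - f y) \<le> real n * e" using Suc.IH by simp
  moreover have "norm (f x - f y) \<le> norm (f x - f m) + norm (f m - f y)"
    using norm_triangle_ineq[of "f x - f m" "f m - f y"] by simp
  ultimately show ?case by (simp add: ring_distribs)
qed simp

lemma uniformly_continuous_affine_bound:
  fixes f :: "'a::real_normed_vector \<Rightarrow> 'b::real_normed_vector"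
  assumes "uniformly_continuous_on UNIV f" "e > 0"
  shows "\<exists>\<eta>>0. \<forall>x y. norm (f x - f y) \<le> e * (norm (x - y) / \<eta> + 1)"
proof -
  obtain d where d: "d > 0" "\<And>x y. dist y x < d \<Longrightarrow> dist (f y) (f x) < e"
    using assms unfolding uniformly_continuous_on_def by blast
  have d': "norm (f x - f y) < e" if "norm (x - y) < d" for x y
    using d(2)[of x y] that by (simp add: dist_norm norm_minus_commute)
  define \<eta> where "\<eta> = d / 2"
  have \<eta>: "0 < \<eta>" "\<eta> < d" unfolding \<eta>_def using d by auto
  have "norm (f x - f y) \<le> e * (norm (x - y) / \<eta> + 1)" for x y
  proof -
    define n where "n = nat \<lceil>norm (x - y) / \<eta>\<rceil>"
    have n: "norm (x - y) / \<eta> \<le> real n" "real n \<le> norm (x - y) / \<eta> + 1"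
      unfolding n_def using \<eta> by (linarith, simp add: nat_le_iff_add)
    then have "norm (x - y) \<le> real n * \<eta>" using \<eta> by (simp add: divide_le_eq)
    then have "norm (f x - f y) \<le> real n * e"
      using uniformly_continuous_chain_bound[of d f e \<eta> x y n] d' \<eta> by blast
    also have "\<dots> \<le> (norm (x - y) / \<eta> + 1) * e" using n(2) assms(2) by (intro mult_right_mono) auto
    finally show ?thesis by (simp add: mult.commute)
  qed
  then show ?thesis using \<eta> by blast
qed

lemma quadratic_ineq_ratio_bound:
  fixes a b s1 s2 :: real
  assumes "0 < s1" "s1 \<le> s2" "0 \<le> a" "0 \<le> b" "s2 * a\<^sup>2 + s1 * b\<^sup>2 \<le> (s1 + s2) * (a * b)"
  shows "s1 * b \<le> s2 * a"
proof -
  have prod: "(s2 * a - s1 * b) * (a - b) \<le> 0"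
    using assms(5) by (simp add: algebra_simps power2_eq_square)
  have "a \<le> b"
  proof (rule ccontr)
    assume "\<not> a \<le> b"
    then have "s1 * b < s2 * a"
      using assms mult_strict_left_mono[of b a s1] mult_right_mono[of s1 s2 a] by linarith
    then show False using prod \<open>\<not> a \<le> b\<close> by (simp add: mult_le_0_iff)
  qed
  show "s1 * b \<le> s2 * a"
  proof (rule ccontr)
    assume c: "\<not> s1 * b \<le> s2 * a"
    show False
    proof (cases "a = b")
      case True
      then show False using c assms(2,4) mult_right_mono[of s1 s2 b] by simp
    next
      case False
      then have "0 < (s2 * a - s1 * b) * (a - b)"
        using c \<open>a \<le> b\<close> by (intro mult_neg_neg) auto
      then show False using prod by simp
    qed
  qed
qed

lemma fb_point_dist_scaled_mono:
  fixes B :: "'a::{real_inner,complete_space} \<Rightarrow> 'a set"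
  assumes B: "maximal_monotone B" and \<sigma>: "0 < \<sigma>1" "\<sigma>1 \<le> \<sigma>2"
  shows "\<sigma>1 * norm (x - fb_point A B \<sigma>2 x) \<le> \<sigma>2 * norm (x - fb_point A B \<sigma>1 x)"
proof -
  have \<sigma>2: "\<sigma>2 > 0" using \<sigma> by simp
  define d1 where "d1 = x - fb_point A B \<sigma>1 x"
  define d2 where "d2 = x - fb_point A B \<sigma>2 x"
  have "0 \<le> inner (((1/\<sigma>1) *\<^sub>R d1 - A x) - ((1/\<sigma>2) *\<^sub>R d2 - A x))
      (fb_point A B \<sigma>1 x - fb_point A B \<sigma>2 x)"
    unfolding d1_def d2_def
    by (rule maximal_monotone_monotone[OF B fb_point_mem[OF B \<sigma>(1)] fb_point_mem[OF B \<sigma>2]])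
  also have "\<dots> = inner ((1/\<sigma>1) *\<^sub>R d1 - (1/\<sigma>2) *\<^sub>R d2) (d2 - d1)"
    unfolding d1_def d2_def by simp
  finally have "0 \<le> inner ((1/\<sigma>1) *\<^sub>R d1 - (1/\<sigma>2) *\<^sub>R d2) (d2 - d1) * (\<sigma>1 * \<sigma>2)"
    using \<sigma> by simp
  also have "\<dots> = (\<sigma>1 + \<sigma>2) * inner d1 d2 - \<sigma>2 * (norm d1)\<^sup>2 - \<sigma>1 * (norm d2)\<^sup>2"
    using \<sigma> \<sigma>2
    by (simp add: inner_diff_left inner_diff_right power2_norm_eq_inner inner_commute field_simps)
  finally have "\<sigma>2 * (norm d1)\<^sup>2 + \<sigma>1 * (norm d2)\<^sup>2 \<le> (\<sigma>1 + \<sigma>2) * inner d1 d2" by linarith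
  also have "\<dots> \<le> (\<sigma>1 + \<sigma>2) * (norm d1 * norm d2)"
    using \<sigma> by (intro mult_left_mono norm_cauchy_schwarz) auto
  finally have "\<sigma>2 * (norm d1)\<^sup>2 + \<sigma>1 * (norm d2)\<^sup>2 \<le> (\<sigma>1 + \<sigma>2) * (norm d1 * norm d2)" .
  from quadratic_ineq_ratio_bound[OF \<sigma> norm_ge_zero norm_ge_zero this]
  show ?thesis unfolding d1_def d2_def .
qed

text \<open>The backtracking condition of the method holds for all sufficiently small step sizes: by
  the previous lemma \<open>\<parallel>x - J\<^sub>\<sigma>\<parallel> \<ge> c\<sigma>\<close>, while uniform continuity bounds the change of \<open>A\<^sub>2\<close>.\<close>

lemma fb_linesearch_terminates:
  fixes B :: "'a::{real_inner,complete_space} \<Rightarrow> 'a set"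
  assumes B: "maximal_monotone B" and \<sigma>0: "\<sigma>0 > 0" and \<theta>: "0 < \<theta>" "\<theta> < 1" and \<delta>: "\<delta> > 0"
    and A2: "uniformly_continuous_on UNIV A2"
  shows "\<exists>j. \<sigma>0 * \<theta>^j * inner (A2 x - A2 (fb_point A B (\<sigma>0 * \<theta>^j) x)) (x - fb_point A B (\<sigma>0 * \<theta>^j) x)
      \<le> \<delta> * (norm (x - fb_point A B (\<sigma>0 * \<theta>^j) x))\<^sup>2"
proof (cases "x = fb_point A B \<sigma>0 x")
  case True
  then show ?thesis by (intro exI[of _ 0]) simp
next
  case False
  define c where "c = norm (x - fb_point A B \<sigma>0 x) / \<sigma>0"
  have c: "c > 0" unfolding c_def using False \<sigma>0 by simp
  obtain \<eta> where \<eta>: "\<eta> > 0" "\<And>x y. norm (A2 x - A2 y) \<le> (\<delta> * c / 2) * (norm (x - y) / \<eta> + 1)"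
    using uniformly_continuous_affine_bound[OF A2, of "\<delta> * c / 2"] \<delta> c by auto
  obtain j where j: "\<theta>^j < \<eta> / (c * \<sigma>0)"
    using real_arch_pow_inv[of "\<eta> / (c * \<sigma>0)" \<theta>] \<eta> c \<sigma>0 \<theta> by auto
  define \<sigma> where "\<sigma> = \<sigma>0 * \<theta>^j"
  have \<sigma>: "\<sigma> > 0" "\<sigma> \<le> \<sigma>0" unfolding \<sigma>_def using \<sigma>0 \<theta> by (simp_all add: power_le_one)
  have c\<sigma>: "c * \<sigma> \<le> \<eta>"
  proof -
    have "c * \<sigma> = (c * \<sigma>0) * \<theta>^j" unfolding \<sigma>_def by simp
    also have "\<dots> \<le> (c * \<sigma>0) * (\<eta> / (c * \<sigma>0))" using j c \<sigma>0 by (intro mult_left_mono) auto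
    finally show ?thesis using c \<sigma>0 by simp
  qed
  define N where "N = norm (x - fb_point A B \<sigma> x)"
  define M where "M = norm (A2 x - A2 (fb_point A B \<sigma> x))"
  have "c * \<sigma> \<le> N"
    using fb_point_dist_scaled_mono[OF B \<sigma>(1,2), of x A] \<sigma>0 unfolding c_def N_def by (simp add: field_simps)
  have N0: "N \<ge> 0" unfolding N_def by simp
  have "\<sigma> * inner (A2 x - A2 (fb_point A B \<sigma> x)) (x - fb_point A B \<sigma> x) \<le> \<sigma> * (M * N)"
    unfolding M_def N_def using \<sigma> by (intro mult_left_mono norm_cauchy_schwarz) auto
  also have "\<dots> \<le> \<sigma> * (((\<delta> * c / 2) * (N / \<eta> + 1)) * N)"
    using \<eta>(2)[of x "fb_point A B \<sigma> x"] N0 \<sigma> unfolding M_def N_def by (intro mult_left_mono mult_right_mono) auto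
  also have "\<dots> = (\<delta> / 2) * ((c * \<sigma> / \<eta>) * N\<^sup>2) + (\<delta> / 2) * ((c * \<sigma>) * N)"
    using \<eta> by (simp add: field_simps power2_eq_square)
  also have "\<dots> \<le> (\<delta> / 2) * (1 * N\<^sup>2) + (\<delta> / 2) * (N * N)"
    using c\<sigma> \<eta> \<delta> \<open>c * \<sigma> \<le> N\<close> N0 by (intro add_mono mult_left_mono mult_right_mono) auto
  also have "\<dots> = \<delta> * N\<^sup>2" by (simp add: power2_eq_square field_simps)
  finally show ?thesis unfolding \<sigma>_def N_def by (intro exI[of _ j]) (simp add: mult.assoc)
qed

section \<open>Zeros of \<open>A + B\<close>\<close>

lemma approx_zero_inner_le:
  assumes B: "maximal_monotone B" and A: "\<And>x y. 0 \<le> inner (A x - A y) (x - y)"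
    and u: "s - A u \<in> B u" and v: "v \<in> B y"
  shows "inner s (y - u) \<le> inner (A y + v) (y - u)"
proof -
  have "0 \<le> inner ((s - A u) - v) (u - y) + inner (A u - A y) (u - y)"
    using maximal_monotone_monotone[OF B u v] A[of u y] by linarith
  also have "\<dots> = inner (A y + v) (y - u) - inner s (y - u)"
    by (simp add: inner_diff_left inner_diff_right inner_add_left algebra_simps)
  finally show ?thesis by simp
qed

lemma nonneg_if_ge_neg_eps:
  fixes X K :: real
  assumes "\<And>e. 0 < e \<Longrightarrow> e \<le> 1 \<Longrightarrow> - e * K \<le> X"
  shows "0 \<le> X"
proof (rule ccontr)
  assume "\<not> 0 \<le> X"
  then have X: "X < 0" by simp
  have K: "K > 0" using assms[of 1] X by simp
  define e where "e = min 1 (- X / (2 * K))"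
  have e: "0 < e" "e \<le> 1" unfolding e_def using X K by (auto simp: field_simps)
  have "e * K \<le> (- X / (2 * K)) * K" unfolding e_def using K by (intro mult_right_mono) auto
  then have "- e * K \<ge> X / 2" using K by simp
  then show False using assms[OF e] X by linarith
qed

lemma fb_point_dist_le_if_monotonically_related:
  fixes A :: "'a::{real_inner,complete_space} \<Rightarrow> 'a"
  assumes B: "maximal_monotone B" and H: "\<And>y v. v \<in> B y \<Longrightarrow> 0 \<le> inner (A y + v) (y - q)"
    and t: "t > 0"
  shows "norm (q - fb_point A B t q) \<le> t * norm (A (fb_point A B t q) - A q)"
proof -
  define p where "p = fb_point A B t q"
  have "0 \<le> inner (A p + ((1/t) *\<^sub>R (q - p) - A q)) (p - q)"
    using H[OF fb_point_mem[OF B t]] unfolding p_def .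
  also have "\<dots> = inner (A p - A q) (p - q) - (1/t) * (norm (q - p))\<^sup>2"
    by (simp add: inner_add_left power2_norm_eq_inner inner_diff_right inner_diff_left
        inner_commute algebra_simps)
  finally have "(1/t) * (norm (q - p))\<^sup>2 \<le> inner (A p - A q) (p - q)" by simp
  also have "\<dots> \<le> norm (A p - A q) * norm (q - p)"
    using norm_cauchy_schwarz[of "A p - A q" "p - q"] by (simp add: norm_minus_commute)
  finally have "(norm (q - p) / t) * norm (q - p) \<le> norm (A p - A q) * norm (q - p)"
    by (simp add: power2_eq_square)
  then have "q = p \<or> norm (q - p) / t \<le> norm (A p - A q)"
    using mult_right_le_imp_le[of "norm (q - p) / t" "norm (q - p)"] by force
  then show ?thesis unfolding p_def[symmetric] using t by (auto simp: divide_le_eq mult.commute)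
qed

text \<open>With an affine bound on \<open>A\<close> of small slope, the previous inequality forces the step
  \<open>q - J\<^sub>t(q - tAq)\<close> to be small compared with \<open>t\<close> once \<open>t\<close> is small.\<close>

lemma fb_point_near_if_monotonically_related:
  fixes A :: "'a::{real_inner,complete_space} \<Rightarrow> 'a"
  assumes B: "maximal_monotone B" and A: "uniformly_continuous_on UNIV A"
    and H: "\<And>y v. v \<in> B y \<Longrightarrow> 0 \<le> inner (A y + v) (y - q)" and e: "e > 0"
  shows "\<exists>t>0. norm (q - fb_point A B t q) \<le> e \<and> norm (q - fb_point A B t q) \<le> t * e"
proof -
  obtain \<eta> where \<eta>: "\<eta> > 0" "\<And>x y. norm (A x - A y) \<le> (e/2) * (norm (x - y) / \<eta> + 1)"
    using uniformly_continuous_affine_bound[OF A, of "e/2"] e by auto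
  define t where "t = min 1 (\<eta> / e)"
  have t: "t > 0" "t \<le> 1" "t * e \<le> \<eta>" unfolding t_def using \<eta> e by (auto simp: min_def field_simps)
  define r where "r = norm (q - fb_point A B t q)"
  have A_bound: "norm (A (fb_point A B t q) - A q) \<le> (e/2) * (r / \<eta> + 1)"
    using \<eta>(2)[of "fb_point A B t q" q] unfolding r_def by (simp add: norm_minus_commute)
  have "r \<le> t * ((e/2) * (r / \<eta> + 1))"
    using fb_point_dist_le_if_monotonically_related[OF B H t(1)] mult_left_mono[OF A_bound, of t] t(1)
    unfolding r_def by linarith
  also have "\<dots> = (t * e / \<eta>) * (r / 2) + t * e / 2" using \<eta> by (simp add: field_simps)
  also have "\<dots> \<le> 1 * (r / 2) + t * e / 2"
    using t \<eta> unfolding r_def by (intro add_right_mono mult_right_mono) (auto simp: field_simps)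
  finally have "r \<le> t * e" by simp
  moreover have "t * e \<le> e" using t e mult_right_mono[of t 1 e] by simp
  ultimately show ?thesis using t(1) unfolding r_def by (intro exI[of _ t]) auto
qed

text \<open>A Minty-type characterization of the zeros of \<open>A + B\<close> for a uniformly continuous
  (not necessarily monotone) \<open>A\<close>: the points \<open>J\<^sub>t(q - tAq)\<close> with their residuals
  \<open>(q - J\<^sub>t(q - tAq))/t - Aq \<in> B(J\<^sub>t(q - tAq))\<close> approximate \<open>(q, -Aq)\<close>.\<close>

lemma mem_zer_sum_if_monotonically_related:
  fixes A :: "'a::{real_inner,complete_space} \<Rightarrow> 'a"
  assumes B: "maximal_monotone B" and A: "uniformly_continuous_on UNIV A"
    and H: "\<And>y v. v \<in> B y \<Longrightarrow> 0 \<le> inner (A y + v) (y - q)"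
  shows "q \<in> zer_sum A B"
proof -
  have "0 \<le> inner (- A q - v) (q - y)" if v: "v \<in> B y" for y v
  proof (rule nonneg_if_ge_neg_eps[where K = "norm (A q) + 1 + norm v + norm (q - y)"])
    fix e :: real assume e: "0 < e" "e \<le> 1"
    obtain t where t: "t > 0" "norm (q - fb_point A B t q) \<le> e" "norm (q - fb_point A B t q) \<le> t * e"
      using fb_point_near_if_monotonically_related[OF B A H e(1)] by blast
    define p where "p = fb_point A B t q"
    define w where "w = (1/t) *\<^sub>R (q - p) - A q"
    have "norm (w + A q) = norm (q - p) / t" unfolding w_def using t(1) by simp
    also have "\<dots> \<le> e" using t(1,3) unfolding p_def by (simp add: divide_le_eq mult.commute)
    finally have w_near: "norm (w + A q) \<le> e" .
    have mono: "0 \<le> inner (w - v) (p - y)"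
      unfolding w_def p_def by (rule maximal_monotone_monotone[OF B fb_point_mem[OF B t(1)] v])
    have split: "inner (- A q - v) (q - y) = inner (w - v) (p - y) + inner (w - v) (q - p)
        - inner (w + A q) (q - y)"
      by (simp add: inner_diff_left inner_diff_right inner_add_left algebra_simps)
    have "norm (w - v) \<le> norm (w + A q) + norm (A q) + norm v"
      using norm_triangle_ineq4[of "w + A q" "A q + v"] norm_triangle_ineq[of "A q" v]
      by (simp add: algebra_simps)
    then have "norm (w - v) \<le> norm (A q) + 1 + norm v" using w_near e by linarith
    then have "\<bar>inner (w - v) (q - p)\<bar> \<le> (norm (A q) + 1 + norm v) * e"
      using Cauchy_Schwarz_ineq2[of "w - v" "q - p"] t(2) unfolding p_def
      by (meson mult_mono norm_ge_zero order_trans)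
    moreover have "\<bar>inner (w + A q) (q - y)\<bar> \<le> e * norm (q - y)"
      using Cauchy_Schwarz_ineq2[of "w + A q" "q - y"] w_near
      by (meson mult_right_mono norm_ge_zero order_trans)
    ultimately show "- e * (norm (A q) + 1 + norm v + norm (q - y)) \<le> inner (- A q - v) (q - y)"
      unfolding split using mono by (simp add: algebra_simps abs_le_iff)
  qed
  then have "- A q \<in> B q" by (intro maximal_monotone_maximal[OF B]) auto
  then show ?thesis unfolding zer_sum_def by force
qed

text \<open>The tolerance does not depend on \<open>u\<close>, so that the set
  is convex.\<close>

definition minty_approx_set :: "('a::real_inner \<Rightarrow> 'a) \<Rightarrow> ('a \<Rightarrow> 'a set) \<Rightarrow> 'a \<Rightarrow> real \<Rightarrow> real \<Rightarrow> 'a set"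
  where "minty_approx_set A B c r e = cball c (r + e) \<inter>
    (\<Inter>y. \<Inter>v\<in>B y. {u. - e * (r + 1 + norm (c - y)) \<le> inner (A y + v) (y - u)})"

lemma mem_minty_approx_set:
  "u \<in> minty_approx_set A B c r e \<longleftrightarrow> norm (u - c) \<le> r + e \<and>
     (\<forall>y v. v \<in> B y \<longrightarrow> - e * (r + 1 + norm (c - y)) \<le> inner (A y + v) (y - u))"
  unfolding minty_approx_set_def by (auto simp: dist_norm norm_minus_commute)

lemma closed_convex_minty_approx_set:
  fixes A :: "'a::real_inner \<Rightarrow> 'a"
  shows "closed (minty_approx_set A B c r e)" "convex (minty_approx_set A B c r e)"
proof -
  have eq: "{u. a \<le> inner w (y - u)} = {u. inner w u \<le> inner w y - a}" for a :: real and w y :: 'a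
    by (auto simp: inner_diff_right)
  have "closed {u. a \<le> inner w (y - u)}" "convex {u. a \<le> inner w (y - u)}" for a :: real and w y :: 'a
    unfolding eq by (simp_all add: closed_halfspace_le convex_halfspace_le)
  then show "closed (minty_approx_set A B c r e)" "convex (minty_approx_set A B c r e)"
    unfolding minty_approx_set_def
    by (intro closed_Int closed_cball closed_INT ballI allI convex_Int convex_cball convex_INT; simp)+
qed

lemma minty_approx_set_mono:
  assumes "0 \<le> r" "e \<le> e'"
  shows "minty_approx_set A B c r e \<subseteq> minty_approx_set A B c r e'"
proof
  fix u assume u: "u \<in> minty_approx_set A B c r e"
  show "u \<in> minty_approx_set A B c r e'" unfolding mem_minty_approx_set
  proof (intro conjI allI impI)
    show "norm (u - c) \<le> r + e'" using u assms(2) unfolding mem_minty_approx_set by linarith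
    fix y v assume "v \<in> B y"
    then have "- e * (r + 1 + norm (c - y)) \<le> inner (A y + v) (y - u)"
      using u unfolding mem_minty_approx_set by blast
    moreover have "- e' * (r + 1 + norm (c - y)) \<le> - e * (r + 1 + norm (c - y))"
      using assms by (simp add: mult_right_mono)
    ultimately show "- e' * (r + 1 + norm (c - y)) \<le> inner (A y + v) (y - u)" by linarith
  qed
qed

lemma approx_zero_mem_minty_approx_set:
  assumes B: "maximal_monotone B" and A: "\<And>x y. 0 \<le> inner (A x - A y) (x - y)"
    and "e \<le> 1" and u: "norm (u - c) \<le> r + e" and s: "norm s \<le> e" "s - A u \<in> B u"
  shows "u \<in> minty_approx_set A B c r e"
  unfolding mem_minty_approx_set
proof (intro conjI allI impI u)
  fix y v assume v: "v \<in> B y"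
  have "norm (y - u) \<le> r + 1 + norm (c - y)"
    using norm_triangle_ineq[of "y - c" "c - u"] u \<open>e \<le> 1\<close> by (simp add: norm_minus_commute)
  moreover have "0 \<le> e" using norm_ge_zero[of s] s(1) by linarith
  ultimately have "norm s * norm (y - u) \<le> e * (r + 1 + norm (c - y))"
    using s(1) by (intro mult_mono) auto
  moreover have "- (norm s * norm (y - u)) \<le> inner s (y - u)"
    using norm_cauchy_schwarz[of "- s" "y - u"] by simp
  ultimately show "- e * (r + 1 + norm (c - y)) \<le> inner (A y + v) (y - u)"
    using approx_zero_inner_le[OF B A s(2) v] by linarith
qed

lemma zer_sum_if_mem_minty_approx_sets:
  fixes A :: "'a::{real_inner,complete_space} \<Rightarrow> 'a"
  assumes B: "maximal_monotone B" and A: "uniformly_continuous_on UNIV A" and "0 \<le> r"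
    and q: "\<And>n::nat. q \<in> minty_approx_set A B c r (1 / (real n + 1))"
  shows "q \<in> zer_sum A B" "norm (q - c) \<le> r"
proof -
  have small: "\<exists>n::nat. 1 / (real n + 1) < e" if "e > 0" for e
    using reals_Archimedean[OF that] by (auto simp: inverse_eq_divide add.commute)
  show "norm (q - c) \<le> r"
  proof (rule field_le_epsilon)
    fix e :: real assume "e > 0"
    then obtain n where "1 / (real n + 1) < e" using small by blast
    then show "norm (q - c) \<le> r + e" using q[of n] unfolding mem_minty_approx_set by simp
  qed
  show "q \<in> zer_sum A B"
  proof (rule mem_zer_sum_if_monotonically_related[OF B A])
    fix y v assume v: "v \<in> B y"
    define K where "K = r + 1 + norm (c - y)"
    show "0 \<le> inner (A y + v) (y - q)"
    proof (rule nonneg_if_ge_neg_eps[where K = K])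
      fix e :: real assume "0 < e" "e \<le> 1"
      then obtain n where n: "1 / (real n + 1) < e" using small by blast
      have "- (1 / (real n + 1)) * K \<le> inner (A y + v) (y - q)"
        using q[of n] v unfolding mem_minty_approx_set K_def by blast
      moreover have "(1 / (real n + 1)) * K \<le> e * K"
        using n \<open>0 \<le> r\<close> unfolding K_def by (intro mult_right_mono) auto
      ultimately show "- e * K \<le> inner (A y + v) (y - q)" by linarith
    qed
  qed
qed

lemma zer_sum_meets_cball:
  fixes A :: "'a::{real_inner,complete_space} \<Rightarrow> 'a" and c :: 'a
  assumes B: "maximal_monotone B" and A_mono: "\<And>x y. 0 \<le> inner (A x - A y) (x - y)"
    and A_uc: "uniformly_continuous_on UNIV A" and r: "0 \<le> r"
    and approx: "\<And>e. e > 0 \<Longrightarrow> \<exists>u s. norm (u - c) \<le> r + e \<and> norm s \<le> e \<and> s - A u \<in> B u"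
  shows "\<exists>q\<in>zer_sum A B. norm (q - c) \<le> r"
proof -
  define S where "S n = minty_approx_set A B c r (1 / (real n + 1))" for n :: nat
  have "\<exists>q. \<forall>C\<in>range S. q \<in> C"
  proof (rule directed_closed_convex_Inter_nonempty[where z = c and R = "r + 1"])
    fix C assume "C \<in> range S"
    then obtain n where n: "C = S n" by blast
    have e: "0 < 1 / (real n + 1)" "1 / (real n + 1) \<le> 1" by (auto simp: divide_le_eq)
    obtain u s where us: "norm (u - c) \<le> r + 1 / (real n + 1)" "norm s \<le> 1 / (real n + 1)" "s - A u \<in> B u"
      using approx[OF e(1)] by blast
    then have "u \<in> C" unfolding n S_def using approx_zero_mem_minty_approx_set[OF B A_mono e(2)] by blast
    moreover have "norm (u - c) \<le> r + 1" using us(1) e(2) by linarith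
    ultimately show "closed C \<and> convex C \<and> C \<noteq> {}" "\<exists>u\<in>C. dist c u \<le> r + 1"
      unfolding n S_def using closed_convex_minty_approx_set by (auto simp: dist_norm norm_minus_commute)
  next
    fix C1 C2 assume "C1 \<in> range S" "C2 \<in> range S"
    then obtain n m where nm: "C1 = S n" "C2 = S m" by blast
    have "S (max n m) \<subseteq> C1 \<inter> C2"
      unfolding nm S_def by (intro Int_greatest minty_approx_set_mono r) (auto simp: frac_le)
    then show "\<exists>C3\<in>range S. C3 \<subseteq> C1 \<inter> C2" by blast
  qed simp
  then obtain q where "\<And>n. q \<in> S n" by blast
  then show ?thesis using zer_sum_if_mem_minty_approx_sets[OF B A_uc r, of q c] unfolding S_def by blast
qed

section \<open>Convergence of the method\<close>

lemma tendsto_0_if_quadratic_bound: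
  fixes D E :: "nat \<Rightarrow> real"
  assumes c: "c > 0" and C: "C1 \<ge> 0" "C2 \<ge> 0" and D: "\<And>k. D k \<ge> 0" and E: "\<And>k. E k \<ge> 0"
    and bound: "\<And>k. c * (D k)\<^sup>2 \<le> (C1 * D k + C2) * E k" and E_lim: "E \<longlonglongrightarrow> 0"
  shows "D \<longlonglongrightarrow> 0"
proof -
  define g where "g k = max (2 * C1 * E k / c) (sqrt (2 * C2 * E k / c))" for k
  have "D k \<le> g k" for k
  proof (rule ccontr)
    assume "\<not> D k \<le> g k"
    then have gt: "2 * C1 * E k / c < D k" "sqrt (2 * C2 * E k / c) < D k" unfolding g_def by auto
    have "C1 * E k \<le> c * D k / 2" using gt(1) c by (simp add: field_simps)
    then have "C1 * E k * D k \<le> c * D k / 2 * D k" using D[of k] by (rule mult_right_mono)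
    moreover have "sqrt (2 * C2 * E k / c) < sqrt ((D k)\<^sup>2)" using gt(2) D[of k] by simp
    then have "2 * C2 * E k / c < (D k)\<^sup>2" by (simp only: real_sqrt_less_iff)
    then have "C2 * E k < c * (D k)\<^sup>2 / 2" using c by (simp add: field_simps)
    ultimately have "(C1 * D k + C2) * E k < c * (D k)\<^sup>2"
      by (simp add: algebra_simps power2_eq_square)
    then show False using bound[of k] by simp
  qed
  then have "\<forall>k. norm (D k) \<le> g k" using D by simp
  moreover have "g \<longlonglongrightarrow> max (2 * C1 * 0 / c) (sqrt (2 * C2 * 0 / c))"
    unfolding g_def using c by (intro tendsto_intros E_lim) auto
  then have "g \<longlonglongrightarrow> 0" by simp
  ultimately show ?thesis by (rule Lim_null_comparison[OF always_eventually])
qed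

lemma norm_sq_add_le_if_obtuse:
  fixes x0 p y :: "'a::real_inner"
  assumes "inner (x0 - p) (y - p) \<le> 0"
  shows "(norm (y - p))\<^sup>2 + (norm (p - x0))\<^sup>2 \<le> (norm (y - x0))\<^sup>2"
proof -
  have "inner (y - p) (p - x0) = ((norm (y - x0))\<^sup>2 - (norm (y - p))\<^sup>2 - (norm (p - x0))\<^sup>2) / 2"
    using dot_norm[of "y - p" "p - x0"] by simp
  moreover have "inner (y - p) (p - x0) = - inner (x0 - p) (y - p)"
    by (simp add: inner_commute inner_diff_right inner_diff_left)
  ultimately show ?thesis using assms by argo
qed

text \<open>Step sizes are shifted by one index with respect to Method 2: \<open>\<alpha> 0\<close> is \<open>\<alpha>\<^sub>-\<^sub>1\<close>, and
  \<open>\<alpha> (Suc k)\<close> is the step size \<open>\<alpha>\<^sub>k\<close> used at the iterate \<open>x k\<close>.\<close>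

locale fb_projection_method =
  fixes A1 A2 :: "'a::{real_inner, complete_space} \<Rightarrow> 'a"
    and B :: "'a \<Rightarrow> 'a set"
    and \<beta> \<theta> \<delta> \<delta>b \<alpha>m1 :: real
    and x :: "nat \<Rightarrow> 'a"
    and \<alpha> :: "nat \<Rightarrow> real"
  assumes \<beta>_pos: "\<beta> > 0"
    and A1_coco: "cocoercive \<beta> A1"
    and A2_mm: "maximal_monotone (\<lambda>z. {A2 z})"
    and A2_uc: "uniformly_continuous_on UNIV A2"
    and B_mm: "maximal_monotone B"
    and zer_ne: "zer_sum (\<lambda>z. A1 z + A2 z) B \<noteq> {}"
    and \<theta>: "0 < \<theta>" "\<theta> < 1"
    and \<delta>: "0 < \<delta>" "\<delta> < 1"
    and \<delta>b: "\<delta>b > 0" "1 - \<delta> - \<delta>b > 0"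
    and \<alpha>m1: "\<alpha>m1 > 0" "\<alpha>m1 \<le> 4 * \<beta> * \<delta>b"
    and \<alpha>_0: "\<alpha> 0 = \<alpha>m1"
    and \<alpha>_step: "\<And>k. \<alpha> (Suc k) = \<alpha> k * \<theta> ^ ls_index (\<lambda>z. A1 z + A2 z) A2 B \<theta> \<delta> (\<alpha> k) (x k)"
    and x_step: "\<And>k. x (Suc k) = proj
        (T_set A2 \<delta>b (\<alpha> (Suc k)) (x k) (fb_point (\<lambda>z. A1 z + A2 z) B (\<alpha> (Suc k)) (x k))
          \<inter> Gamma_set (x 0) (x k)) (x 0)"
begin

abbreviation A :: "'a \<Rightarrow> 'a" where "A \<equiv> \<lambda>z. A1 z + A2 z"
abbreviation j :: "nat \<Rightarrow> nat" where "j k \<equiv> ls_index A A2 B \<theta> \<delta> (\<alpha> k) (x k)"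
abbreviation xbar :: "nat \<Rightarrow> 'a" where "xbar k \<equiv> fb_point A B (\<alpha> (Suc k)) (x k)"
abbreviation T :: "nat \<Rightarrow> 'a set" where "T k \<equiv> T_set A2 \<delta>b (\<alpha> (Suc k)) (x k) (xbar k)"
abbreviation \<Gamma> :: "nat \<Rightarrow> 'a set" where "\<Gamma> k \<equiv> Gamma_set (x 0) (x k)"

lemma A2_monotone: "0 \<le> inner (A2 u - A2 w) (u - w)"
  using maximal_monotone_monotone[OF A2_mm, of "A2 u" u "A2 w" w] by simp

lemma A_monotone: "0 \<le> inner (A u - A w) (u - w)"
  using cocoercive_monotone[OF A1_coco \<beta>_pos, of u w] A2_monotone[of u w]
  by (simp add: inner_diff_left inner_add_left algebra_simps)

lemma A_uniformly_continuous: "uniformly_continuous_on UNIV A"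
  using cocoercive_uniformly_continuous[OF A1_coco \<beta>_pos] A2_uc by (rule uniformly_continuous_on_add)

lemma alpha_pos: "\<alpha> k > 0"
  by (induction k) (use \<alpha>_0 \<alpha>m1 \<alpha>_step \<theta> in auto)

lemma alpha_Suc_le: "\<alpha> (Suc k) \<le> \<alpha> k"
  using \<alpha>_step[of k] alpha_pos[of k] power_le_one[of \<theta> "j k"] \<theta> by (simp add: mult_left_le)

lemma alpha_le: "\<alpha> k \<le> \<alpha>m1"
  by (induction k) (use \<alpha>_0 alpha_Suc_le order_trans in auto)

definition linesearch_ok :: "real \<Rightarrow> 'a \<Rightarrow> bool" where
  "linesearch_ok \<sigma> u \<longleftrightarrow> \<sigma> * inner (A2 u - A2 (fb_point A B \<sigma> u)) (u - fb_point A B \<sigma> u)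
     \<le> \<delta> * (norm (u - fb_point A B \<sigma> u))\<^sup>2"

lemma j_eq_Least: "j k = (LEAST i. linesearch_ok (\<alpha> k * \<theta> ^ i) (x k))"
  unfolding ls_index_def linesearch_ok_def ..

lemma linesearch_ok_step: "linesearch_ok (\<alpha> (Suc k)) (x k)"
proof -
  have "\<exists>i. linesearch_ok (\<alpha> k * \<theta> ^ i) (x k)"
    unfolding linesearch_ok_def by (rule fb_linesearch_terminates[OF B_mm alpha_pos \<theta> \<delta>(1) A2_uc])
  from LeastI_ex[OF this] show ?thesis unfolding j_eq_Least[symmetric] \<alpha>_step[of k] .
qed

lemma linesearch_fails_before:
  assumes "j k \<noteq> 0"
  shows "\<not> linesearch_ok (\<alpha> k * \<theta> ^ (j k - 1)) (x k)"
  using not_less_Least[of "j k - 1" "\<lambda>i. linesearch_ok (\<alpha> k * \<theta> ^ i) (x k)"] assms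
  unfolding j_eq_Least[symmetric] by simp

text \<open>The bound \<open>\<alpha>\<^sub>k \<le> 4\<beta>\<delta>b\<close> is exactly what is needed to absorb the cocoercive part.\<close>

lemma zer_subset_T: "zer_sum A B \<subseteq> T k"
proof
  fix z assume "z \<in> zer_sum A B"
  then obtain w where w: "w \<in> B z" "A z + w = 0" unfolding zer_sum_def by blast
  define a where "a = \<alpha> (Suc k)"
  have a: "a > 0" "a \<le> 4 * \<beta> * \<delta>b" unfolding a_def using alpha_pos alpha_le \<alpha>m1 order_trans by blast+
  define D where "D = x k - xbar k"
  define g where "g = A1 (x k) - A1 z"
  have "w = - A z" using w(2) by (simp only: add_eq_0_iff)
  with w(1) have "- A z \<in> B z" by simp
  then have m1: "0 \<le> inner (((1/a) *\<^sub>R D - A (x k)) - (- A z)) (xbar k - z)"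
    using maximal_monotone_monotone[OF B_mm fb_point_mem[OF B_mm alpha_pos]] unfolding D_def a_def by blast
  have m2: "0 \<le> inner (A2 (xbar k) - A2 z) (xbar k - z)" by (rule A2_monotone)
  have coco: "\<beta> * (norm g)\<^sup>2 \<le> inner g (x k - z)" using A1_coco unfolding g_def cocoercive_def by blast
  have "inner ((1/a) *\<^sub>R D - (A2 (x k) - A2 (xbar k))) (z - xbar k)
      = inner g (z - xbar k) - inner (((1/a) *\<^sub>R D - A (x k)) - (- A z)) (xbar k - z)
        - inner (A2 (xbar k) - A2 z) (xbar k - z)"
    unfolding g_def by (simp add: inner_diff_left inner_diff_right inner_add_left inner_add_right algebra_simps)
  also have "\<dots> \<le> inner g D - inner g (x k - z)"
    using m1 m2 unfolding D_def by (simp add: inner_diff_right algebra_simps)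
  also have "\<dots> \<le> norm g * norm D - \<beta> * (norm g)\<^sup>2" using coco norm_cauchy_schwarz[of g D] by simp
  also have "\<dots> \<le> (norm D)\<^sup>2 / (4 * \<beta>)"
  proof -
    have "0 \<le> (2 * \<beta> * norm g - norm D)\<^sup>2" by simp
    then show ?thesis using \<beta>_pos by (simp add: field_simps power2_eq_square algebra_simps)
  qed
  also have "\<dots> = (1 / (4 * \<beta>)) * (norm D)\<^sup>2" by simp
  also have "\<dots> \<le> \<delta>b / a * (norm D)\<^sup>2"
    using a \<beta>_pos \<delta>b by (intro mult_right_mono) (simp_all add: field_simps)
  finally show "z \<in> T k" unfolding T_set_def D_def a_def by simp
qed

lemma T_Gamma_closed_convex: "closed (T k \<inter> \<Gamma> k)" "convex (T k \<inter> \<Gamma> k)"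
proof -
  have eq: "{u. inner w (u - y) \<le> c} = {u. inner w u \<le> c + inner w y}" for w y :: 'a and c
    by (auto simp: inner_diff_right)
  show "closed (T k \<inter> \<Gamma> k)" "convex (T k \<inter> \<Gamma> k)"
    unfolding T_set_def Gamma_set_def eq
    by (simp_all add: closed_Int closed_halfspace_le convex_Int convex_halfspace_le)
qed

lemma zer_subset_Gamma: "zer_sum A B \<subseteq> \<Gamma> k"
proof (induction k)
  case 0
  then show ?case unfolding Gamma_set_def by auto
next
  case (Suc k)
  then have sub: "zer_sum A B \<subseteq> T k \<inter> \<Gamma> k" using zer_subset_T by blast
  then have ne: "T k \<inter> \<Gamma> k \<noteq> {}" using zer_ne by blast
  have "inner (x 0 - x (Suc k)) (z - x (Suc k)) \<le> 0" if "z \<in> zer_sum A B" for z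
  proof -
    have "z \<in> T k \<inter> \<Gamma> k" using sub that by blast
    then show ?thesis unfolding x_step[of k] by (rule proj_inner_le[OF T_Gamma_closed_convex ne])
  qed
  then show ?case unfolding Gamma_set_def by auto
qed

lemma x_Suc_mem: "x (Suc k) \<in> T k" "x (Suc k) \<in> \<Gamma> k"
proof -
  have "T k \<inter> \<Gamma> k \<noteq> {}" using zer_ne zer_subset_T zer_subset_Gamma by blast
  then have "x (Suc k) \<in> T k \<inter> \<Gamma> k" using proj_in[OF T_Gamma_closed_convex] x_step[of k] by simp
  then show "x (Suc k) \<in> T k" "x (Suc k) \<in> \<Gamma> k" by auto
qed

lemma dist_x0_step: "(norm (x (Suc k) - x k))\<^sup>2 + (norm (x k - x 0))\<^sup>2 \<le> (norm (x (Suc k) - x 0))\<^sup>2"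
  using x_Suc_mem(2)[of k] unfolding Gamma_set_def by (intro norm_sq_add_le_if_obtuse) simp

lemma dist_zer: "z \<in> zer_sum A B \<Longrightarrow> (norm (z - x k))\<^sup>2 + (norm (x k - x 0))\<^sup>2 \<le> (norm (z - x 0))\<^sup>2"
  using zer_subset_Gamma[of k] unfolding Gamma_set_def by (intro norm_sq_add_le_if_obtuse) auto

lemma incseq_dist_x0: "incseq (\<lambda>k. norm (x k - x 0))"
proof (rule incseq_SucI)
  fix k
  have "(norm (x k - x 0))\<^sup>2 \<le> (norm (x (Suc k) - x 0))\<^sup>2"
    using dist_x0_step[of k] zero_le_power2[of "norm (x (Suc k) - x k)"] by linarith
  then show "norm (x k - x 0) \<le> norm (x (Suc k) - x 0)" by (rule power2_le_imp_le) simp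
qed

lemma bdd_above_dist_x0: "bdd_above (range (\<lambda>k. norm (x k - x 0)))"
proof -
  obtain z where z: "z \<in> zer_sum A B" using zer_ne by blast
  have "(norm (x k - x 0))\<^sup>2 \<le> (norm (z - x 0))\<^sup>2" for k
    using dist_zer[OF z, of k] zero_le_power2[of "norm (z - x k)"] by linarith
  then have "norm (x k - x 0) \<le> norm (z - x 0)" for k by (rule power2_le_imp_le) simp
  then show ?thesis by (rule bdd_aboveI2)
qed

definition L :: real where "L = (SUP k. norm (x k - x 0))"

lemma dist_x0_le_L: "norm (x k - x 0) \<le> L"
  unfolding L_def by (rule cSUP_upper[OF UNIV_I bdd_above_dist_x0])

lemma L_nonneg: "0 \<le> L"
  using dist_x0_le_L[of 0] by simp

lemma dist_x0_tendsto_L: "(\<lambda>k. norm (x k - x 0)) \<longlonglongrightarrow> L"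
  unfolding L_def by (rule LIMSEQ_incseq_SUP[OF bdd_above_dist_x0 incseq_dist_x0])

lemma steps_tendsto_0: "(\<lambda>k. x (Suc k) - x k) \<longlonglongrightarrow> 0"
proof -
  have "(\<lambda>k. (norm (x (Suc k) - x 0))\<^sup>2 - (norm (x k - x 0))\<^sup>2) \<longlonglongrightarrow> L\<^sup>2 - L\<^sup>2"
    by (intro tendsto_intros dist_x0_tendsto_L LIMSEQ_Suc[OF dist_x0_tendsto_L])
  from tendsto_real_sqrt[OF this]
  have lim: "(\<lambda>k. sqrt ((norm (x (Suc k) - x 0))\<^sup>2 - (norm (x k - x 0))\<^sup>2)) \<longlonglongrightarrow> 0" by simp
  have "\<forall>k. norm (x (Suc k) - x k) \<le> sqrt ((norm (x (Suc k) - x 0))\<^sup>2 - (norm (x k - x 0))\<^sup>2)"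
    using dist_x0_step by (intro allI real_le_rsqrt) (simp add: algebra_simps)
  from Lim_null_comparison[OF always_eventually[OF this] lim] show ?thesis .
qed

text \<open>Combine \<open>x (Suc k) \<in> T k\<close> with the linesearch condition.\<close>

lemma residual_bound:
  "(1 - \<delta> - \<delta>b) * (norm (x k - xbar k))\<^sup>2 \<le>
    (norm (x k - xbar k) + \<alpha> (Suc k) * norm (A2 (x k) - A2 (xbar k))) * norm (x k - x (Suc k))"
proof -
  define a where "a = \<alpha> (Suc k)"
  have a: "a > 0" unfolding a_def by (rule alpha_pos)
  define D where "D = x k - xbar k"
  define G where "G = A2 (x k) - A2 (xbar k)"
  define e where "e = x k - x (Suc k)"
  define w where "w = (1/a) *\<^sub>R D - G"
  have T: "inner w (x (Suc k) - xbar k) \<le> \<delta>b / a * (norm D)\<^sup>2"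
    using x_Suc_mem(1)[of k] unfolding T_set_def w_def D_def G_def a_def by simp
  have C: "a * inner G D \<le> \<delta> * (norm D)\<^sup>2"
    using linesearch_ok_step[of k] unfolding linesearch_ok_def a_def G_def D_def .
  have "inner w e = inner w D - inner w (x (Suc k) - xbar k)"
    unfolding D_def e_def by (simp add: inner_diff_right)
  also have "inner w D = (norm D)\<^sup>2 / a - inner G D"
    unfolding w_def by (simp add: inner_diff_left power2_norm_eq_inner)
  finally have "a * inner w e \<ge> a * ((norm D)\<^sup>2 / a - inner G D - \<delta>b / a * (norm D)\<^sup>2)"
    using T a by (intro mult_left_mono) auto
  also have "a * ((norm D)\<^sup>2 / a - inner G D - \<delta>b / a * (norm D)\<^sup>2) = (norm D)\<^sup>2 - a * inner G D - \<delta>b * (norm D)\<^sup>2"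
    using a by (simp add: field_simps)
  finally have "(1 - \<delta> - \<delta>b) * (norm D)\<^sup>2 \<le> a * inner w e" using C by (simp add: algebra_simps)
  also have "a * inner w e = inner (D - a *\<^sub>R G) e" unfolding w_def using a by (simp add: inner_diff_left field_simps)
  also have "\<dots> \<le> norm (D - a *\<^sub>R G) * norm e" by (rule norm_cauchy_schwarz)
  also have "\<dots> \<le> (norm D + a * norm G) * norm e"
    using norm_triangle_ineq4[of D "a *\<^sub>R G"] a by (intro mult_right_mono) auto
  finally show ?thesis unfolding D_def G_def e_def a_def .
qed

lemma residual_tendsto_0: "(\<lambda>k. x k - xbar k) \<longlonglongrightarrow> 0"
proof -
  obtain \<eta> where \<eta>: "\<eta> > 0" "\<And>u v. norm (A2 u - A2 v) \<le> 1 * (norm (u - v) / \<eta> + 1)"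
    using uniformly_continuous_affine_bound[OF A2_uc, of 1] by auto
  have "(\<lambda>k. norm (x k - xbar k)) \<longlonglongrightarrow> 0"
  proof (rule tendsto_0_if_quadratic_bound[of "1 - \<delta> - \<delta>b" "1 + \<alpha>m1 / \<eta>" \<alpha>m1])
    show "(\<lambda>k. norm (x k - x (Suc k))) \<longlonglongrightarrow> 0"
      using tendsto_norm_zero[OF steps_tendsto_0] by (simp add: norm_minus_commute)
    fix k
    have "\<alpha> (Suc k) * norm (A2 (x k) - A2 (xbar k)) \<le> \<alpha>m1 * (norm (x k - xbar k) / \<eta> + 1)"
      using \<eta>(2)[of "x k" "xbar k"] alpha_le[of "Suc k"] alpha_pos[of "Suc k"] by (intro mult_mono) auto
    then have "norm (x k - xbar k) + \<alpha> (Suc k) * norm (A2 (x k) - A2 (xbar k))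
        \<le> (1 + \<alpha>m1 / \<eta>) * norm (x k - xbar k) + \<alpha>m1"
      by (simp add: field_simps)
    then have "(norm (x k - xbar k) + \<alpha> (Suc k) * norm (A2 (x k) - A2 (xbar k))) * norm (x k - x (Suc k))
        \<le> ((1 + \<alpha>m1 / \<eta>) * norm (x k - xbar k) + \<alpha>m1) * norm (x k - x (Suc k))"
      by (rule mult_right_mono) simp
    with residual_bound[of k] show "(1 - \<delta> - \<delta>b) * (norm (x k - xbar k))\<^sup>2
        \<le> ((1 + \<alpha>m1 / \<eta>) * norm (x k - xbar k) + \<alpha>m1) * norm (x k - x (Suc k))"
      by (rule order_trans)
  qed (use \<delta>b \<alpha>m1 \<eta> in auto)
  then show ?thesis by (simp add: tendsto_norm_zero_iff)
qed

lemma alpha_antimono: "n \<le> m \<Longrightarrow> \<alpha> m \<le> \<alpha> n"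
  using lift_Suc_antimono_le[of \<alpha>, OF alpha_Suc_le] by blast

lemma linesearch_fail_bound:
  assumes "\<not> linesearch_ok \<sigma> u" "\<sigma> > 0"
  shows "\<delta> * norm (u - fb_point A B \<sigma> u) < \<sigma> * norm (A2 u - A2 (fb_point A B \<sigma> u))"
proof -
  define N where "N = norm (u - fb_point A B \<sigma> u)"
  define M where "M = norm (A2 u - A2 (fb_point A B \<sigma> u))"
  have "\<sigma> * inner (A2 u - A2 (fb_point A B \<sigma> u)) (u - fb_point A B \<sigma> u) \<le> \<sigma> * (M * N)"
    unfolding M_def N_def using assms(2) by (intro mult_left_mono norm_cauchy_schwarz) auto
  then have lt: "\<delta> * N * N < \<sigma> * M * N"
    using assms(1) unfolding linesearch_ok_def N_def by (simp add: power2_eq_square mult_ac)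
  then have "N > 0" unfolding N_def by (cases "N = 0") (auto simp: N_def)
  with lt show ?thesis unfolding N_def M_def by simp
qed

lemma backtracks_infinitely_often:
  assumes "\<And>a. a > 0 \<Longrightarrow> \<exists>k. \<alpha> k < a"
  shows "\<exists>k\<ge>N. j k \<noteq> 0"
proof (rule ccontr)
  assume no_backtrack: "\<not> (\<exists>k\<ge>N. j k \<noteq> 0)"
  have \<alpha>_const: "\<alpha> (N + m) = \<alpha> N" for m
  proof (induction m)
    case (Suc m)
    have "j (N + m) = 0" using no_backtrack by auto
    then show ?case using Suc \<alpha>_step[of "N + m"] by simp
  qed simp
  have "\<alpha> N \<le> \<alpha> k" for k
  proof (cases "k \<le> N")
    case False
    then obtain m where "k = N + m" using le_Suc_ex[of N k] by auto
    then show ?thesis using \<alpha>_const by simp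
  qed (simp add: alpha_antimono)
  then show False using assms[OF alpha_pos[of N]] by (meson not_le)
qed

text \<open>\<open>\<sigma> = \<alpha>\<^sub>k/\<theta>\<close> is the last trial step rejected by the backtracking at step \<open>k\<close>.\<close>

lemma rejected_step_bounds:
  assumes "j k \<noteq> 0"
  defines "\<sigma> \<equiv> \<alpha> k * \<theta> ^ (j k - 1)"
  shows "\<sigma> > 0" and "\<theta> * norm (x k - fb_point A B \<sigma> (x k)) \<le> norm (x k - xbar k)"
    and "\<delta> * norm (x k - fb_point A B \<sigma> (x k)) < \<sigma> * norm (A2 (x k) - A2 (fb_point A B \<sigma> (x k)))"
proof -
  show \<sigma>: "\<sigma> > 0" unfolding \<sigma>_def using alpha_pos \<theta> by simp
  have \<alpha>_Suc: "\<alpha> (Suc k) = \<theta> * \<sigma>"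
    unfolding \<sigma>_def \<alpha>_step[of k] using assms(1) by (cases "j k") simp_all
  have "\<alpha> (Suc k) * norm (x k - fb_point A B \<sigma> (x k)) \<le> \<sigma> * norm (x k - xbar k)"
    using fb_point_dist_scaled_mono[OF B_mm alpha_pos, of "Suc k" \<sigma>] \<alpha>_Suc \<theta> \<sigma>
    by (simp add: mult_left_le_one_le)
  then show "\<theta> * norm (x k - fb_point A B \<sigma> (x k)) \<le> norm (x k - xbar k)"
    using \<sigma> unfolding \<alpha>_Suc by (simp add: mult_ac)
  show "\<delta> * norm (x k - fb_point A B \<sigma> (x k)) < \<sigma> * norm (A2 (x k) - A2 (fb_point A B \<sigma> (x k)))"
    using linesearch_fail_bound[OF linesearch_fails_before[OF assms(1)] \<sigma>[unfolded \<sigma>_def]]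
    unfolding \<sigma>_def .
qed

text \<open>If the step sizes stay away from \<open>0\<close>, the points \<open>xbar k\<close> themselves have small
  residuals; otherwise the rejected trial steps do.\<close>

lemma small_fb_residual:
  assumes "\<epsilon> > 0"
  shows "\<exists>k \<sigma>. \<sigma> > 0 \<and> norm (x k - fb_point A B \<sigma> (x k)) \<le> \<epsilon> * min 1 \<sigma>"
proof (cases "\<exists>a>0. \<forall>k. a \<le> \<alpha> k")
  case True
  then obtain a where a: "a > 0" "\<And>k. a \<le> \<alpha> k" by blast
  have "\<epsilon> * min 1 a > 0" using assms a by simp
  then obtain k where "norm (x k - xbar k) < \<epsilon> * min 1 a"
    using LIMSEQ_D[OF residual_tendsto_0] by fastforce
  moreover have "\<epsilon> * min 1 a \<le> \<epsilon> * min 1 (\<alpha> (Suc k))"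
    using assms a(2)[of "Suc k"] by (intro mult_left_mono) auto
  ultimately show ?thesis using alpha_pos[of "Suc k"] by (intro exI[of _ k] exI[of _ "\<alpha> (Suc k)"]) auto
next
  case False
  obtain \<eta> where \<eta>: "\<eta> > 0" "\<And>u v. norm (A2 u - A2 v) \<le> (\<delta> * \<epsilon> / 2) * (norm (u - v) / \<eta> + 1)"
    using uniformly_continuous_affine_bound[OF A2_uc, of "\<delta> * \<epsilon> / 2"] \<delta> assms by auto
  have "\<theta> * min (min 1 \<epsilon>) \<eta> > 0" using \<theta> assms \<eta> by simp
  then obtain K where K: "\<And>k. k \<ge> K \<Longrightarrow> norm (x k - xbar k) < \<theta> * min (min 1 \<epsilon>) \<eta>"
    using LIMSEQ_D[OF residual_tendsto_0] by fastforce
  obtain k where k: "k \<ge> K" "j k \<noteq> 0" using backtracks_infinitely_often False by (meson not_le)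
  define \<sigma> where "\<sigma> = \<alpha> k * \<theta> ^ (j k - 1)"
  define N where "N = norm (x k - fb_point A B \<sigma> (x k))"
  note \<sigma> = rejected_step_bounds[OF k(2), folded \<sigma>_def N_def]
  have "\<theta> * N < \<theta> * min (min 1 \<epsilon>) \<eta>" using \<sigma>(2) K[OF k(1)] by linarith
  then have N_small: "N \<le> min (min 1 \<epsilon>) \<eta>" using \<theta>(1) by (meson less_imp_le mult_less_cancel_left_pos)
  have "\<delta> * N < \<sigma> * norm (A2 (x k) - A2 (fb_point A B \<sigma> (x k)))" by (rule \<sigma>(3))
  also have "\<dots> \<le> \<sigma> * ((\<delta> * \<epsilon> / 2) * 2)"
    using \<eta>(2)[of "x k" "fb_point A B \<sigma> (x k)"] N_small \<eta>(1) \<delta> assms \<sigma>(1) unfolding N_def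
    by (intro mult_left_mono order_trans[OF _ mult_left_mono[of _ 2]]) (auto simp: divide_le_eq)
  finally have "N \<le> \<epsilon> * \<sigma>" using \<delta> by (simp add: mult_ac)
  moreover have "N \<le> \<epsilon>" using N_small by simp
  ultimately have "N \<le> \<epsilon> * min 1 \<sigma>" by (simp add: min_def)
  then show ?thesis using \<sigma>(1) unfolding N_def by blast
qed

lemma approx_zeros_near_cball:
  assumes "e > 0"
  shows "\<exists>u s. norm (u - x 0) \<le> L + e \<and> norm s \<le> e \<and> s - A u \<in> B u"
proof -
  obtain d where d: "d > 0" "\<And>u v. dist u v < d \<Longrightarrow> dist (A u) (A v) < e / 2"
    using A_uniformly_continuous assms unfolding uniformly_continuous_on_def
    by (metis UNIV_I half_gt_zero)
  define \<epsilon> where "\<epsilon> = min (e / 2) (d / 2)"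
  have \<epsilon>: "\<epsilon> > 0" "\<epsilon> \<le> e / 2" "\<epsilon> < d" unfolding \<epsilon>_def using assms d(1) by auto
  obtain k \<sigma> where \<sigma>: "\<sigma> > 0" and N: "norm (x k - fb_point A B \<sigma> (x k)) \<le> \<epsilon> * min 1 \<sigma>"
    using small_fb_residual[OF \<epsilon>(1)] by blast
  define u where "u = fb_point A B \<sigma> (x k)"
  define s where "s = (1/\<sigma>) *\<^sub>R (x k - u) - (A (x k) - A u)"
  have "\<epsilon> * min 1 \<sigma> \<le> \<epsilon>" "\<epsilon> * min 1 \<sigma> \<le> \<epsilon> * \<sigma>"
    using \<epsilon>(1) by (simp_all add: mult_left_le)
  then have N1: "norm (x k - u) \<le> \<epsilon>" and N\<sigma>: "norm (x k - u) \<le> \<epsilon> * \<sigma>"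
    using N unfolding u_def by linarith+
  have "s - A u \<in> B u" unfolding s_def u_def using fb_point_mem[OF B_mm \<sigma>] by simp
  moreover have "norm s \<le> e"
  proof -
    have "norm ((1/\<sigma>) *\<^sub>R (x k - u)) = norm (x k - u) / \<sigma>" using \<sigma> by simp
    also have "\<dots> \<le> \<epsilon>" using N\<sigma> \<sigma> by (simp add: divide_le_eq)
    finally have "norm ((1/\<sigma>) *\<^sub>R (x k - u)) \<le> \<epsilon>" .
    moreover have "norm (A (x k) - A u) < e / 2" using d(2)[of "x k" u] N1 \<epsilon>(3) by (simp add: dist_norm)
    ultimately show ?thesis unfolding s_def using norm_triangle_ineq4[of "(1/\<sigma>) *\<^sub>R (x k - u)" "A (x k) - A u"] \<epsilon>(2)
      by linarith
  qed
  moreover have "norm (u - x 0) \<le> L + e"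
    using norm_triangle_ineq[of "u - x k" "x k - x 0"] dist_x0_le_L[of k] N1 \<epsilon>(2) assms
    by (simp add: norm_minus_commute)
  ultimately show ?thesis by blast
qed

text \<open>There is a zero \<open>q\<close> with \<open>\<parallel>q - x 0\<parallel> \<le> L\<close>, and then
  \<open>\<parallel>q - x k\<parallel>\<^sup>2 \<le> \<parallel>q - x 0\<parallel>\<^sup>2 - \<parallel>x k - x 0\<parallel>\<^sup>2 \<le> L\<^sup>2 - \<parallel>x k - x 0\<parallel>\<^sup>2 \<rightarrow> 0\<close>.\<close>

lemma strong_convergence: "\<exists>q\<in>zer_sum A B. x \<longlonglongrightarrow> q"
proof -
  obtain q where q: "q \<in> zer_sum A B" "norm (q - x 0) \<le> L"
    using zer_sum_meets_cball[OF B_mm A_monotone A_uniformly_continuous L_nonneg approx_zeros_near_cball]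
    by blast
  have "(\<lambda>k. L\<^sup>2 - (norm (x k - x 0))\<^sup>2) \<longlonglongrightarrow> L\<^sup>2 - L\<^sup>2"
    by (intro tendsto_intros dist_x0_tendsto_L)
  from tendsto_real_sqrt[OF this]
  have lim: "(\<lambda>k. sqrt (L\<^sup>2 - (norm (x k - x 0))\<^sup>2)) \<longlonglongrightarrow> 0" by simp
  have "(norm (q - x 0))\<^sup>2 \<le> L\<^sup>2" using q(2) by (simp add: power_mono)
  then have "\<forall>k. norm (x k - q) \<le> sqrt (L\<^sup>2 - (norm (x k - x 0))\<^sup>2)"
    using dist_zer[OF q(1)] by (intro allI real_le_rsqrt) (smt (verit) norm_minus_commute)
  from Lim_null_comparison[OF always_eventually[OF this] lim] have "(\<lambda>k. x k - q) \<longlonglongrightarrow> 0" .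
  then show ?thesis using q(1) LIM_zero_cancel by blast
qed

end

lemma weak_accum_point_of_LIMSEQ:
  assumes "x \<longlonglongrightarrow> q" "weak_accum_point x p"
  shows "p = q"
proof -
  obtain r where r: "strict_mono r" "weak_conv (x \<circ> r) p"
    using assms(2) unfolding weak_accum_point_def by blast
  have "inner p y = inner q y" for y
  proof (rule LIMSEQ_unique)
    show "(\<lambda>k. inner ((x \<circ> r) k) y) \<longlonglongrightarrow> inner p y" using r(2) unfolding weak_conv_def by blast
    show "(\<lambda>k. inner ((x \<circ> r) k) y) \<longlonglongrightarrow> inner q y"
      by (intro tendsto_inner LIMSEQ_subseq_LIMSEQ[OF assms(1) r(1)] tendsto_const)
  qed
  then have "inner (p - q) (p - q) = 0" by (simp add: inner_diff_left)
  then show ?thesis by simp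
qed

theorem lemma4p14:
  fixes A1 A2 :: "'a::{real_inner, complete_space} \<Rightarrow> 'a"
    and B :: "'a \<Rightarrow> 'a set"
    and \<beta> \<theta> \<delta> \<delta>b \<alpha>m1 :: real
    and x :: "nat \<Rightarrow> 'a"
    and \<alpha> :: "nat \<Rightarrow> real"
  assumes \<beta>_pos: "\<beta> > 0"
    and A1_coco: "cocoercive \<beta> A1"
    and A2_mm: "maximal_monotone (\<lambda>z. {A2 z})"
    and A2_uc: "uniformly_continuous_on UNIV A2"
    and B_mm: "maximal_monotone B"
    and zer_ne: "zer_sum (\<lambda>z. A1 z + A2 z) B \<noteq> {}"
    and \<theta>: "0 < \<theta>" "\<theta> < 1"
    and \<delta>: "0 < \<delta>" "\<delta> < 1"
    and \<delta>b: "\<delta>b > 0" "1 - \<delta> - \<delta>b > 0"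
    and \<alpha>m1: "\<alpha>m1 > 0" "\<alpha>m1 \<le> 4 * \<beta> * \<delta>b"
    and \<alpha>_0: "\<alpha> 0 = \<alpha>m1"
    and \<alpha>_step: "\<And>k. \<alpha> (Suc k) = \<alpha> k * \<theta> ^ ls_index (\<lambda>z. A1 z + A2 z) A2 B \<theta> \<delta> (\<alpha> k) (x k)"
    and x_step: "\<And>k. x (Suc k) = proj
        (T_set A2 \<delta>b (\<alpha> (Suc k)) (x k) (fb_point (\<lambda>z. A1 z + A2 z) B (\<alpha> (Suc k)) (x k))
          \<inter> Gamma_set (x 0) (x k)) (x 0)"
    and no_stop: "\<And>k. x (Suc k) \<noteq> x k"
  shows "\<forall>p. weak_accum_point x p \<longrightarrow> p \<in> zer_sum (\<lambda>z. A1 z + A2 z) B"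
proof -
  interpret fb_projection_method A1 A2 B \<beta> \<theta> \<delta> \<delta>b \<alpha>m1 x \<alpha>
    using assms by (simp add: fb_projection_method_def)
  obtain q where "q \<in> zer_sum A B" "x \<longlonglongrightarrow> q" using strong_convergence by blast
  then show ?thesis using weak_accum_point_of_LIMSEQ by blast
qed

end
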